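(* Let $M$ be a finitely generated graded $R$-module. Then $qp.Spec_g(M)$ with the quasi-Zariski topology is a $T_1$-space if and only if $qp.Spec_g(M)=Max_g(M)$. In this case, $qp.Spec_g(M)=Spec_g(M)=Max_g(M)$.
   Context: $R=\bigoplus_{g\in G}R_g$ is a graded commutative ring with identity graded by a group $G$, $h(R)=\bigcup_g R_g$; $M$ is a graded $R$-module, $h(M)$ its homogeneous elements. $Gr(I)$ is the graded radical of a graded ideal $I$. $(K:_RM)=\{r: rM\subseteq K\}$. Graded prime submodule: proper graded $P$ with $rm\in P$ ($r\in h(R), m\in h(M)$) implying $m\in P$ or $r\in(P:_RM)$; $Spec_g(M)$ is the set of graded prime submodules. $Gr_M(K)$: intersection of graded prime submodules containing $K$ ($M$ if none). Graded primeful property of $K$: for each graded prime $p\supseteq(K:_RM)$ there is a graded prime submodule $P\supseteq K$ with $(P:_RM)=p$. Graded quasi-primary submodule: proper graded $Q$ with $rm\in Q$ ($r\in h(R),m\in h(M)$) implying $r\in Gr((Q:_RM))$ or $m\in Gr_M(Q)$. $qp.Spec_g(M)$: graded quasi-primary submodules with the graded primeful property. $qp\text{-}V_M^g(K)=\{Q\in qp.Spec_g(M): Gr((Q:_RM))\supseteq Gr((K:_RM))\}$; the quasi-Zariski topology has closed sets exactly these. $Max_g(M)$ is the set of graded maximal submodules of $M$ (graded $K\neq M$ with no graded submodule strictly between $K$ and $M$). *)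

theory Defs
  imports "HOL-Analysis.Analysis"
begin

definition hdecomp :: "('g \<Rightarrow> 'a::comm_monoid_add set) \<Rightarrow> 'a \<Rightarrow> ('g \<Rightarrow> 'a) \<Rightarrow> bool" where
  "hdecomp A x c \<longleftrightarrow> finite {g. c g \<noteq> 0} \<and> (\<forall>g. c g \<in> A g) \<and> x = sum c {g. c g \<noteq> 0}"

definition internal_direct_sum :: "('g \<Rightarrow> 'a::ab_group_add set) \<Rightarrow> bool" where
  "internal_direct_sum A \<longleftrightarrow>
     (\<forall>g. 0 \<in> A g \<and> (\<forall>x\<in>A g. \<forall>y\<in>A g. x + y \<in> A g) \<and> (\<forall>x\<in>A g. - x \<in> A g))
     \<and> (\<forall>x. \<exists>!c. hdecomp A x c)"

definition graded_ring :: "('g::group_add \<Rightarrow> 'r::comm_ring_1 set) \<Rightarrow> bool" where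
  "graded_ring RG \<longleftrightarrow> internal_direct_sum RG \<and> (\<forall>g h. \<forall>a\<in>RG g. \<forall>b\<in>RG h. a * b \<in> RG (g + h))"

definition graded_module ::
  "('r::comm_ring_1 \<Rightarrow> 'm::ab_group_add \<Rightarrow> 'm) \<Rightarrow> ('g::group_add \<Rightarrow> 'r set) \<Rightarrow> ('g \<Rightarrow> 'm set) \<Rightarrow> bool" where
  "graded_module smul RG MG \<longleftrightarrow> graded_ring RG \<and> module smul \<and> internal_direct_sum MG
     \<and> (\<forall>g h. \<forall>a\<in>RG g. \<forall>m\<in>MG h. smul a m \<in> MG (g + h))"

definition homog :: "('g \<Rightarrow> 'a set) \<Rightarrow> 'a set" where
  "homog A = (\<Union>g. A g)"

definition graded_set :: "('g \<Rightarrow> 'a::comm_monoid_add set) \<Rightarrow> 'a set \<Rightarrow> bool" where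
  "graded_set A N \<longleftrightarrow> (\<forall>x\<in>N. \<exists>c. hdecomp (\<lambda>g. A g \<inter> N) x c)"

definition graded_submodule ::
  "('r::comm_ring_1 \<Rightarrow> 'm::ab_group_add \<Rightarrow> 'm) \<Rightarrow> ('g \<Rightarrow> 'm set) \<Rightarrow> 'm set \<Rightarrow> bool" where
  "graded_submodule smul MG N \<longleftrightarrow> module.subspace smul N \<and> graded_set MG N"

definition graded_ideal :: "('g \<Rightarrow> 'r::comm_ring_1 set) \<Rightarrow> 'r set \<Rightarrow> bool" where
  "graded_ideal RG I \<longleftrightarrow> 0 \<in> I \<and> (\<forall>x\<in>I. \<forall>y\<in>I. x + y \<in> I) \<and> (\<forall>r. \<forall>x\<in>I. r * x \<in> I)
     \<and> graded_set RG I"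

definition graded_prime_ideal :: "('g \<Rightarrow> 'r::comm_ring_1 set) \<Rightarrow> 'r set \<Rightarrow> bool" where
  "graded_prime_ideal RG P \<longleftrightarrow> graded_ideal RG P \<and> P \<noteq> UNIV
     \<and> (\<forall>a\<in>homog RG. \<forall>b\<in>homog RG. a * b \<in> P \<longrightarrow> a \<in> P \<or> b \<in> P)"

definition graded_radical :: "('g \<Rightarrow> 'r::comm_ring_1 set) \<Rightarrow> 'r set \<Rightarrow> 'r set" where
  "graded_radical RG I = {x. \<exists>c. hdecomp RG x c \<and> (\<forall>g. \<exists>n>0. c g ^ n \<in> I)}"

definition colon :: "('r \<Rightarrow> 'm \<Rightarrow> 'm) \<Rightarrow> 'm set \<Rightarrow> 'r set" where
  "colon smul K = {r. \<forall>m. smul r m \<in> K}"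

definition graded_prime_submodule ::
  "('r::comm_ring_1 \<Rightarrow> 'm::ab_group_add \<Rightarrow> 'm) \<Rightarrow> ('g \<Rightarrow> 'r set) \<Rightarrow> ('g \<Rightarrow> 'm set) \<Rightarrow> 'm set \<Rightarrow> bool" where
  "graded_prime_submodule smul RG MG P \<longleftrightarrow> graded_submodule smul MG P \<and> P \<noteq> UNIV
     \<and> (\<forall>r\<in>homog RG. \<forall>m\<in>homog MG. smul r m \<in> P \<longrightarrow> m \<in> P \<or> r \<in> colon smul P)"

definition Spec_g ::
  "('r::comm_ring_1 \<Rightarrow> 'm::ab_group_add \<Rightarrow> 'm) \<Rightarrow> ('g \<Rightarrow> 'r set) \<Rightarrow> ('g \<Rightarrow> 'm set) \<Rightarrow> 'm set set" where
  "Spec_g smul RG MG = {P. graded_prime_submodule smul RG MG P}"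

text \<open>Gr_M(K): intersection of graded primes containing K (= UNIV if there is none).\<close>
definition graded_M_radical ::
  "('r::comm_ring_1 \<Rightarrow> 'm::ab_group_add \<Rightarrow> 'm) \<Rightarrow> ('g \<Rightarrow> 'r set) \<Rightarrow> ('g \<Rightarrow> 'm set) \<Rightarrow> 'm set \<Rightarrow> 'm set" where
  "graded_M_radical smul RG MG K = \<Inter> {P \<in> Spec_g smul RG MG. K \<subseteq> P}"

definition graded_primeful ::
  "('r::comm_ring_1 \<Rightarrow> 'm::ab_group_add \<Rightarrow> 'm) \<Rightarrow> ('g \<Rightarrow> 'r set) \<Rightarrow> ('g \<Rightarrow> 'm set) \<Rightarrow> 'm set \<Rightarrow> bool" where
  "graded_primeful smul RG MG K \<longleftrightarrow>
     (\<forall>p. graded_prime_ideal RG p \<and> colon smul K \<subseteq> p \<longrightarrow>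
        (\<exists>P \<in> Spec_g smul RG MG. K \<subseteq> P \<and> colon smul P = p))"

definition graded_quasi_primary ::
  "('r::comm_ring_1 \<Rightarrow> 'm::ab_group_add \<Rightarrow> 'm) \<Rightarrow> ('g \<Rightarrow> 'r set) \<Rightarrow> ('g \<Rightarrow> 'm set) \<Rightarrow> 'm set \<Rightarrow> bool" where
  "graded_quasi_primary smul RG MG Q \<longleftrightarrow> graded_submodule smul MG Q \<and> Q \<noteq> UNIV
     \<and> (\<forall>r\<in>homog RG. \<forall>m\<in>homog MG. smul r m \<in> Q \<longrightarrow>
          r \<in> graded_radical RG (colon smul Q) \<or> m \<in> graded_M_radical smul RG MG Q)"

definition qp_Spec_g ::
  "('r::comm_ring_1 \<Rightarrow> 'm::ab_group_add \<Rightarrow> 'm) \<Rightarrow> ('g \<Rightarrow> 'r set) \<Rightarrow> ('g \<Rightarrow> 'm set) \<Rightarrow> 'm set set" where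
  "qp_Spec_g smul RG MG =
     {Q. graded_quasi_primary smul RG MG Q \<and> graded_primeful smul RG MG Q}"

definition qp_V ::
  "('r::comm_ring_1 \<Rightarrow> 'm::ab_group_add \<Rightarrow> 'm) \<Rightarrow> ('g \<Rightarrow> 'r set) \<Rightarrow> ('g \<Rightarrow> 'm set) \<Rightarrow> 'm set \<Rightarrow> 'm set set" where
  "qp_V smul RG MG K = {Q \<in> qp_Spec_g smul RG MG.
      graded_radical RG (colon smul K) \<subseteq> graded_radical RG (colon smul Q)}"

definition quasi_zariski ::
  "('r::comm_ring_1 \<Rightarrow> 'm::ab_group_add \<Rightarrow> 'm) \<Rightarrow> ('g \<Rightarrow> 'r set) \<Rightarrow> ('g \<Rightarrow> 'm set) \<Rightarrow> 'm set topology" where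
  "quasi_zariski smul RG MG = topology (\<lambda>U. \<exists>K. graded_submodule smul MG K
        \<and> U = qp_Spec_g smul RG MG - qp_V smul RG MG K)"

definition Max_g ::
  "('r::comm_ring_1 \<Rightarrow> 'm::ab_group_add \<Rightarrow> 'm) \<Rightarrow> ('g \<Rightarrow> 'm set) \<Rightarrow> 'm set set" where
  "Max_g smul MG = {K. graded_submodule smul MG K \<and> K \<noteq> UNIV
     \<and> (\<forall>N. graded_submodule smul MG N \<and> K \<subseteq> N \<longrightarrow> N = K \<or> N = UNIV)}"

definition finitely_generated :: "('r::comm_ring_1 \<Rightarrow> 'm::ab_group_add \<Rightarrow> 'm) \<Rightarrow> bool" where
  "finitely_generated smul \<longleftrightarrow> (\<exists>S. finite S \<and> module.span smul S = UNIV)"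

end

theory Submission
  imports Defs "Jordan_Normal_Form.Determinant"
begin

text \<open>
  Two facts about a finitely generated graded module \<open>M\<close> drive the proof, both resting on the
  determinant (Cayley--Hamilton) trick: if \<open>t M \<subseteq> K + J M\<close> then \<open>(t\<^sup>n + a) M \<subseteq> K\<close> for some
  \<open>a \<in> J\<close>.

  First, the sets \<open>V(K)\<close> are closed under finite unions, \<open>V(K \<inter> L) = V(K) \<union> V(L)\<close>, because
  \<open>\<surd>(Q : M)\<close> behaves like a graded prime ideal on homogeneous elements when \<open>Q\<close> is quasi-primary
  and primeful, and under arbitrary intersections, realised by \<open>\<Sum>K. (K : M) M\<close>. So the
  quasi-Zariski topology is a topology on \<open>qp.Spec\<^sub>g(M)\<close>, and \<open>{Q}\<close> is closed iff \<open>V(Q) = {Q}\<close>.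

  Second, every graded submodule \<open>K\<close> is primeful: for a graded prime \<open>p \<supseteq> (K : M)\<close>, saturating
  \<open>K + p M\<close> at the homogeneous elements outside \<open>p\<close> yields a graded prime submodule with colon
  \<open>p\<close>. Hence \<open>Max\<^sub>g(M) \<subseteq> Spec\<^sub>g(M) \<subseteq> qp.Spec\<^sub>g(M)\<close>.

  If the space is \<open>T\<^sub>1\<close>, a point \<open>Q\<close> lies below a maximal \<open>K \<in> V(Q) = {Q}\<close>, so \<open>Q\<close> is maximal.
  Conversely, if all points are maximal and \<open>Q' \<in> V(Q)\<close>, then \<open>(Q : M) = (Q' : M)\<close>, so
  \<open>Q \<inter> Q'\<close> is a graded prime, hence maximal, submodule and \<open>Q = Q'\<close>.
\<close>

section \<open>Homogeneous decompositions\<close>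

lemma hdecompI:
  assumes "finite T" "{g. c g \<noteq> 0} \<subseteq> T" "\<And>g. c g \<in> A g" "x = sum c T"
  shows "hdecomp A x c"
  using assms sum.mono_neutral_left[OF assms(1,2), of c] finite_subset[OF assms(2,1)]
  unfolding hdecomp_def by auto

lemma hdecomp_sum:
  assumes "hdecomp A x c" "finite T" "{g. c g \<noteq> 0} \<subseteq> T"
  shows "x = sum c T"
  using assms sum.mono_neutral_left[OF assms(2,3), of c] unfolding hdecomp_def by auto

lemma hdecomp_component: "hdecomp A x c \<Longrightarrow> c g \<in> A g"
  unfolding hdecomp_def by blast

lemma hdecomp_mono: "hdecomp A x c \<Longrightarrow> (\<And>g. A g \<subseteq> B g) \<Longrightarrow> hdecomp B x c"
  unfolding hdecomp_def by blast

lemma hdecomp_singleton: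
  assumes "\<And>h. 0 \<in> A h" "a \<in> A g"
  shows "hdecomp A a (\<lambda>h. if h = g then a else 0)"
  by (rule hdecompI[of "{g}"]) (use assms in auto)

lemma hdecomp_sum_list:
  assumes "hdecomp A x c" "\<And>g. c g \<in> B"
  obtains xs where "set xs \<subseteq> B" "x = sum_list xs"
proof -
  obtain gs where gs: "set gs = {g. c g \<noteq> 0}" "distinct gs"
    using assms(1) finite_distinct_list unfolding hdecomp_def by blast
  have "x = sum_list (map c gs)"
    using assms(1) gs by (simp add: hdecomp_def sum_list_distinct_conv_sum_set)
  then show thesis using that[of "map c gs"] assms(2) by auto
qed

lemma sum_list_hdecomp:
  assumes zero: "\<And>g. 0 \<in> A g" and add: "\<And>g x y. x \<in> A g \<Longrightarrow> y \<in> A g \<Longrightarrow> x + y \<in> A g"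
    and xs: "set xs \<subseteq> (\<Union>g. A g)"
  shows "\<exists>c. hdecomp A (sum_list xs) c"
  using xs
proof (induction xs)
  case Nil
  have "hdecomp A 0 (\<lambda>_. 0)" by (rule hdecompI[of "{}"]) (use zero in auto)
  then show ?case by auto
next
  case (Cons y xs)
  obtain c where c: "hdecomp A (sum_list xs) c" using Cons by auto
  obtain g where g: "y \<in> A g" using Cons.prems by auto
  define c' where "c' h = c h + (if h = g then y else 0)" for h
  let ?T = "insert g {h. c h \<noteq> 0}"
  have fin: "finite ?T" using c unfolding hdecomp_def by simp
  have "sum_list xs = sum c ?T" by (rule hdecomp_sum[OF c fin]) auto
  then have "sum_list (y # xs) = sum c ?T + y" by (simp add: add.commute)
  also have "\<dots> = sum c' ?T"
    using fin by (simp add: c'_def sum.distrib)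
  finally have "hdecomp A (sum_list (y # xs)) c'"
    by (intro hdecompI[OF fin]) (auto simp: c'_def intro: add g hdecomp_component[OF c])
  then show ?case by blast
qed

lemma hdecomp_shift:
  fixes F :: "'a::ab_group_add \<Rightarrow> 'b::ab_group_add"
  assumes c: "hdecomp A x c"
    and add: "\<And>a b. F (a + b) = F a + F b"
    and deg: "\<And>g a. a \<in> A g \<Longrightarrow> F a \<in> B (\<phi> g)"
    and inv1: "\<And>g. \<phi> (\<psi> g) = g" and inv2: "\<And>g. \<psi> (\<phi> g) = g"
  shows "hdecomp B (F x) (\<lambda>k. F (c (\<psi> k)))"
proof -
  interpret additive F by standard (rule add)
  let ?S = "{g. c g \<noteq> 0}"
  have fin: "finite (\<phi> ` ?S)" using c unfolding hdecomp_def by blast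
  have sub: "{k. F (c (\<psi> k)) \<noteq> 0} \<subseteq> \<phi> ` ?S"
    using zero inv1 by (metis (mono_tags, lifting) image_eqI mem_Collect_eq subsetI)
  have "inj_on \<phi> ?S" by (metis inj_onI inv2)
  then have "sum (\<lambda>k. F (c (\<psi> k))) (\<phi> ` ?S) = F (sum c ?S)"
    by (simp add: sum.reindex inv2 sum)
  also have "sum c ?S = x" using c unfolding hdecomp_def by simp
  finally show ?thesis
    by (intro hdecompI[OF fin sub]) (use deg hdecomp_component[OF c] inv1 in metis)+
qed

lemma homogI: "a \<in> A g \<Longrightarrow> a \<in> homog A"
  unfolding homog_def by blast

lemma homogE: "a \<in> homog A \<Longrightarrow> (\<And>g. a \<in> A g \<Longrightarrow> P) \<Longrightarrow> P"
  unfolding homog_def by blast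

lemma internal_direct_sum_hdecomp_unique:
  "internal_direct_sum A \<Longrightarrow> hdecomp A x c \<Longrightarrow> hdecomp A x d \<Longrightarrow> c = d"
  unfolding internal_direct_sum_def by blast

lemma internal_direct_sum_obtain_hdecomp:
  assumes "internal_direct_sum A"
  obtains c where "hdecomp A x c"
  using assms unfolding internal_direct_sum_def by blast

lemma internal_direct_sum_zero: "internal_direct_sum A \<Longrightarrow> 0 \<in> A g"
  unfolding internal_direct_sum_def by blast

lemma internal_direct_sum_add: "internal_direct_sum A \<Longrightarrow> x \<in> A g \<Longrightarrow> y \<in> A g \<Longrightarrow> x + y \<in> A g"
  unfolding internal_direct_sum_def by blast

section \<open>Ideals and radicals\<close>

definition ideal :: "'a::comm_ring_1 set \<Rightarrow> bool" where
  "ideal J \<longleftrightarrow> 0 \<in> J \<and> (\<forall>x\<in>J. \<forall>y\<in>J. x + y \<in> J) \<and> (\<forall>r. \<forall>x\<in>J. r * x \<in> J)"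

lemma ideal_0: "ideal J \<Longrightarrow> 0 \<in> J"
  unfolding ideal_def by blast

lemma ideal_add: "ideal J \<Longrightarrow> x \<in> J \<Longrightarrow> y \<in> J \<Longrightarrow> x + y \<in> J"
  unfolding ideal_def by blast

lemma ideal_mult_left: "ideal J \<Longrightarrow> x \<in> J \<Longrightarrow> r * x \<in> J"
  unfolding ideal_def by blast

lemma ideal_mult_right: "ideal J \<Longrightarrow> x \<in> J \<Longrightarrow> x * r \<in> J"
  unfolding ideal_def by (metis mult.commute)

lemma ideal_uminus: "ideal J \<Longrightarrow> x \<in> J \<Longrightarrow> - x \<in> J"
  using ideal_mult_left[of J x "-1"] by simp

lemma ideal_diff: "ideal J \<Longrightarrow> x \<in> J \<Longrightarrow> y \<in> J \<Longrightarrow> x - y \<in> J"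
  using ideal_add[of J x "- y"] ideal_uminus[of J y] by simp

lemma ideal_sum: "ideal J \<Longrightarrow> (\<And>i. i \<in> F \<Longrightarrow> f i \<in> J) \<Longrightarrow> sum f F \<in> J"
  by (induction F rule: infinite_finite_induct) (auto intro: ideal_0 ideal_add)

lemma ideal_prod_diff:
  assumes "ideal J" "finite F" "\<And>i. i \<in> F \<Longrightarrow> f i - g i \<in> J"
  shows "prod f F - prod g F \<in> J"
  using assms(2,3)
proof (induction F rule: finite_induct)
  case (insert x F)
  have "prod f (insert x F) - prod g (insert x F)
      = f x * (prod f F - prod g F) + (f x - g x) * prod g F"
    using insert.hyps by (simp add: algebra_simps)
  then show ?case
    using insert assms(1) by (auto intro: ideal_add ideal_mult_left ideal_mult_right)
qed (simp add: ideal_0[OF assms(1)])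

lemma module_mult: "Modules.module ((*) :: 'a::comm_ring_1 \<Rightarrow> 'a \<Rightarrow> 'a)"
  by standard (auto simp: algebra_simps)

lemma ideal_iff_subspace: "ideal J \<longleftrightarrow> Modules.module.subspace ((*) :: 'a::comm_ring_1 \<Rightarrow> 'a \<Rightarrow> 'a) J"
  unfolding ideal_def Modules.module.subspace_def[OF module_mult] by auto

definition rad :: "'a::comm_ring_1 set \<Rightarrow> 'a set" where
  "rad I = {x. \<exists>n>0. x ^ n \<in> I}"

lemma rad_superset: "I \<subseteq> rad I"
  unfolding rad_def by (auto intro: exI[of _ 1])

lemma power_in_radD:
  assumes "x ^ n \<in> rad I" "n > 0"
  shows "x \<in> rad I"
proof -
  obtain k where "k > 0" "(x ^ n) ^ k \<in> I" using assms(1) unfolding rad_def by blast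
  then show ?thesis
    unfolding rad_def using assms(2) by (intro CollectI exI[of _ "n * k"]) (simp add: power_mult)
qed

lemma rad_rad: "rad (rad I) = rad I"
proof
  show "rad (rad I) \<subseteq> rad I"
  proof
    fix x assume "x \<in> rad (rad I)"
    then obtain n where "x ^ n \<in> rad I" "n > 0" unfolding rad_def[of "rad I"] by blast
    then show "x \<in> rad I" by (rule power_in_radD)
  qed
qed (rule rad_superset)

lemma ideal_binomial_power:
  assumes J: "ideal J" and x: "x ^ n \<in> J" and y: "y ^ m \<in> J"
  shows "(x + y) ^ (n + m) \<in> J"
proof -
  have "(x + y) ^ (n + m) = (\<Sum>k\<le>n + m. of_nat ((n + m) choose k) * x ^ k * y ^ (n + m - k))"
    by (rule binomial_ring)
  also have "\<dots> \<in> J"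
  proof (rule ideal_sum[OF J])
    fix k
    show "of_nat ((n + m) choose k) * x ^ k * y ^ (n + m - k) \<in> J"
    proof (cases "n \<le> k")
      case True
      then have "x ^ k = x ^ n * x ^ (k - n)" by (metis le_add_diff_inverse power_add)
      then show ?thesis using ideal_mult_left[OF J] ideal_mult_right[OF J] x
        by (simp add: mult.assoc mult.left_commute)
    next
      case False
      then have "n + m - k = m + (n - k)" by simp
      then have "y ^ (n + m - k) = y ^ m * y ^ (n - k)" by (simp add: power_add)
      then show ?thesis using ideal_mult_left[OF J] ideal_mult_right[OF J] y
        by (simp add: mult.assoc mult.left_commute)
    qed
  qed
  finally show ?thesis .
qed

lemma ideal_rad:
  assumes J: "ideal J"
  shows "ideal (rad J)"
  unfolding ideal_def
proof (intro conjI ballI allI)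
  show "0 \<in> rad J" using ideal_0[OF J] rad_superset by blast
next
  fix x y assume "x \<in> rad J" "y \<in> rad J"
  then obtain n m where "n > 0" "x ^ n \<in> J" "m > 0" "y ^ m \<in> J" unfolding rad_def by blast
  then show "x + y \<in> rad J"
    unfolding rad_def using ideal_binomial_power[OF J] by (intro CollectI exI[of _ "n + m"]) auto
next
  fix r x assume "x \<in> rad J"
  then obtain n where "n > 0" "x ^ n \<in> J" unfolding rad_def by blast
  then show "r * x \<in> rad J"
    unfolding rad_def using ideal_mult_left[OF J, of "x ^ n" "r ^ n"]
    by (intro CollectI exI[of _ n]) (auto simp: power_mult_distrib)
qed

lemma colon_mono: "K \<subseteq> L \<Longrightarrow> colon smul K \<subseteq> colon smul L"
  unfolding colon_def by blast

lemma colon_Int: "colon smul (K \<inter> L) = colon smul K \<inter> colon smul L"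
  unfolding colon_def by blast

lemma colon_UNIV: "colon smul UNIV = UNIV"
  unfolding colon_def by blast

section \<open>Finitely generated modules and the determinant trick\<close>

lemma det_diff_in_ideal:
  assumes J: "ideal J" and A: "A \<in> carrier_mat n n" and B: "B \<in> carrier_mat n n"
    and AB: "\<And>i j. i < n \<Longrightarrow> j < n \<Longrightarrow> A $$ (i, j) - B $$ (i, j) \<in> J"
  shows "Determinant.det A - Determinant.det B \<in> J"
proof -
  have "Determinant.det A - Determinant.det B
      = (\<Sum>p\<in>{p. p permutes {0..<n}}.
           signof p * ((\<Prod>i = 0..<n. A $$ (i, p i)) - (\<Prod>i = 0..<n. B $$ (i, p i))))"
    unfolding det_def'[OF A] det_def'[OF B] sum_subtractf[symmetric] by (simp add: algebra_simps)
  also have "\<dots> \<in> J"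
  proof (intro ideal_sum[OF J] ideal_mult_left[OF J] ideal_prod_diff[OF J])
    fix p i assume "p \<in> {p. p permutes {0..<n}}" "i \<in> {0..<n}"
    then show "A $$ (i, p i) - B $$ (i, p i) \<in> J" using AB permutes_in_image by fastforce
  qed simp
  finally show ?thesis .
qed

context Modules.module
begin

lemma ideal_colon: "subspace N \<Longrightarrow> ideal (colon scale N)"
  unfolding ideal_def colon_def
  by (auto simp: subspace_0 subspace_add scale_left_distrib subspace_scale simp flip: scale_scale)

lemma scale_sum_list_right: "scale a (sum_list xs) = sum_list (map (scale a) xs)"
  by (induction xs) (auto simp: scale_right_distrib)

lemma scale_sum_list_sum_list:
  "scale (sum_list as) (sum_list xs) = sum_list (concat (map (\<lambda>a. map (scale a) xs) as))"
  by (induction as) (simp_all add: scale_left_distrib scale_sum_list_right[symmetric])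

lemma subspace_sum_list: "subspace N \<Longrightarrow> set xs \<subseteq> N \<Longrightarrow> sum_list xs \<in> N"
  by (induction xs) (auto simp: subspace_0 subspace_add)

lemma span_set_nth:
  assumes "distinct xs" "y \<in> span (set xs)"
  obtains c where "y = (\<Sum>i = 0..<length xs. scale (c i) (xs ! i))"
proof -
  obtain u where "y = (\<Sum>v\<in>set xs. scale (u v) v)"
    using assms(2) span_finite[of "set xs"] by auto
  also have "\<dots> = (\<Sum>i = 0..<length xs. scale (u (xs ! i)) (xs ! i))"
    by (rule sum.reindex_bij_betw[OF bij_betw_nth[OF assms(1) atLeast0LessThan refl], symmetric])
  finally show thesis by (rule that)
qed

lemma subspace_ideal_combinations:
  assumes K: "subspace K" and J: "ideal J"
  shows "subspace {y. \<exists>a k. (\<forall>i. a i \<in> J) \<and> k \<in> K \<and>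
    y = (\<Sum>i = 0..<length xs. scale (a i) (xs ! i)) + k}"
    (is "subspace {y. \<exists>a k. (\<forall>i. a i \<in> J) \<and> k \<in> K \<and> y = ?comb a + k}")
  unfolding subspace_def
proof (intro conjI ballI allI)
  show "0 \<in> {y. \<exists>a k. (\<forall>i. a i \<in> J) \<and> k \<in> K \<and> y = ?comb a + k}"
    using ideal_0[OF J] subspace_0[OF K] by (intro CollectI exI[of _ "\<lambda>_. 0"] exI[of _ 0]) simp
next
  fix x y assume "x \<in> {y. \<exists>a k. (\<forall>i. a i \<in> J) \<and> k \<in> K \<and> y = ?comb a + k}"
    "y \<in> {y. \<exists>a k. (\<forall>i. a i \<in> J) \<and> k \<in> K \<and> y = ?comb a + k}"
  then obtain a k b l where "\<forall>i. a i \<in> J" "k \<in> K" "x = ?comb a + k"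
    "\<forall>i. b i \<in> J" "l \<in> K" "y = ?comb b + l" by blast
  moreover have "?comb a + k + (?comb b + l) = ?comb (\<lambda>i. a i + b i) + (k + l)"
    by (simp add: scale_left_distrib sum.distrib algebra_simps)
  ultimately show "x + y \<in> {y. \<exists>a k. (\<forall>i. a i \<in> J) \<and> k \<in> K \<and> y = ?comb a + k}"
    using ideal_add[OF J] subspace_add[OF K]
    by (intro CollectI exI[of _ "\<lambda>i. a i + b i"] exI[of _ "k + l"]) auto
next
  fix r x assume "x \<in> {y. \<exists>a k. (\<forall>i. a i \<in> J) \<and> k \<in> K \<and> y = ?comb a + k}"
  then obtain a k where "\<forall>i. a i \<in> J" "k \<in> K" "x = ?comb a + k" by blast
  moreover have "scale r (?comb a + k) = ?comb (\<lambda>i. r * a i) + scale r k"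
    by (simp add: scale_sum_right scale_right_distrib)
  ultimately show "scale r x \<in> {y. \<exists>a k. (\<forall>i. a i \<in> J) \<and> k \<in> K \<and> y = ?comb a + k}"
    using ideal_mult_left[OF J] subspace_scale[OF K]
    by (intro CollectI exI[of _ "\<lambda>i. r * a i"] exI[of _ "scale r k"]) auto
qed

lemma span_Un_ideal_multiples_nth:
  assumes xs: "distinct xs" "span (set xs) = UNIV" and K: "subspace K" and J: "ideal J"
    and y: "y \<in> span (K \<union> {scale j m | j m. j \<in> J})"
  shows "\<exists>a k. (\<forall>i. a i \<in> J) \<and> k \<in> K \<and> y = (\<Sum>i = 0..<length xs. scale (a i) (xs ! i)) + k"
proof -
  let ?comb = "\<lambda>a. \<Sum>i = 0..<length xs. scale (a i) (xs ! i)"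
  have "K \<union> {scale j m | j m. j \<in> J} \<subseteq> {y. \<exists>a k. (\<forall>i. a i \<in> J) \<and> k \<in> K \<and> y = ?comb a + k}"
  proof
    fix x assume "x \<in> K \<union> {scale j m | j m. j \<in> J}"
    then consider "x \<in> K" | j m where "j \<in> J" "x = scale j m" by blast
    then show "x \<in> {y. \<exists>a k. (\<forall>i. a i \<in> J) \<and> k \<in> K \<and> y = ?comb a + k}"
    proof cases
      case 1
      then show ?thesis using ideal_0[OF J] by (intro CollectI exI[of _ "\<lambda>_. 0"] exI[of _ x]) simp
    next
      case 2
      obtain c where "m = ?comb c" using span_set_nth[OF xs(1)] xs(2) by blast
      then have "x = ?comb (\<lambda>i. j * c i) + 0" using 2 by (simp add: scale_sum_right)
      then show ?thesis using ideal_mult_right[OF J 2(1)] subspace_0[OF K]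
        by (intro CollectI exI[of _ "\<lambda>i. j * c i"] exI[of _ 0]) auto
    qed
  qed
  then show ?thesis using span_minimal[OF _ subspace_ideal_combinations[OF K J]] y by blast
qed

lemma det_scale_in_subspace:
  assumes B: "B \<in> carrier_mat n n" and K: "subspace K" and p: "p < n"
    and rel: "\<And>i. i < n \<Longrightarrow> (\<Sum>l = 0..<n. scale (B $$ (i, l)) (x l)) \<in> K"
  shows "scale (Determinant.det B) (x p) \<in> K"
proof -
  define C where "C = adj_mat B"
  have C: "C \<in> carrier_mat n n" "C * B = Determinant.det B \<cdot>\<^sub>m 1\<^sub>m n"
    using adj_mat[OF B] unfolding C_def by auto
  have CB: "(\<Sum>i = 0..<n. C $$ (p, i) * B $$ (i, l)) = (if p = l then Determinant.det B else 0)"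
    if "l < n" for l
  proof -
    have "(C * B) $$ (p, l) = (\<Sum>i = 0..<n. C $$ (p, i) * B $$ (i, l))"
      using that p C(1) B by (simp add: scalar_prod_def)
    moreover have "(C * B) $$ (p, l) = (if p = l then Determinant.det B else 0)"
      unfolding C(2) using that p by simp
    ultimately show ?thesis by simp
  qed
  have "(\<Sum>i = 0..<n. scale (C $$ (p, i)) (\<Sum>l = 0..<n. scale (B $$ (i, l)) (x l))) \<in> K"
    by (intro subspace_sum[OF K] subspace_scale[OF K] rel) simp
  also have "(\<Sum>i = 0..<n. scale (C $$ (p, i)) (\<Sum>l = 0..<n. scale (B $$ (i, l)) (x l)))
      = (\<Sum>i = 0..<n. \<Sum>l = 0..<n. scale (C $$ (p, i) * B $$ (i, l)) (x l))"
    by (simp add: scale_sum_right)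
  also have "\<dots> = (\<Sum>l = 0..<n. scale (\<Sum>i = 0..<n. C $$ (p, i) * B $$ (i, l)) (x l))"
    by (subst sum.swap) (simp add: scale_sum_left)
  also have "\<dots> = (\<Sum>l = 0..<n. if p = l then scale (Determinant.det B) (x l) else 0)"
    by (rule sum.cong) (auto simp: CB)
  also have "\<dots> = scale (Determinant.det B) (x p)"
    using p by simp
  finally show ?thesis .
qed

text \<open>With \<open>t x\<^sub>i = \<Sum>\<^sub>l A\<^sub>i\<^sub>l x\<^sub>l + k\<^sub>i\<close>, the adjugate of \<open>B = t \<cdot> 1 - A\<close> gives \<open>det B \<cdot> M \<subseteq> K\<close>, and
  \<open>det B \<equiv> t\<^sup>n\<close> modulo \<open>J\<close>.\<close>

lemma determinant_trick_nth:
  assumes xs: "distinct xs" "span (set xs) = UNIV" and K: "subspace K" and J: "ideal J"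
    and t: "\<And>m. scale t m \<in> span (K \<union> {scale j m | j m. j \<in> J})"
  obtains a where "a \<in> J" "\<And>m. scale (t ^ length xs + a) m \<in> K"
proof -
  define n where "n = length xs"
  have "\<forall>i. \<exists>a k. (\<forall>l. a l \<in> J) \<and> k \<in> K \<and>
      scale t (xs ! i) = (\<Sum>l = 0..<n. scale (a l) (xs ! l)) + k"
    using span_Un_ideal_multiples_nth[OF xs K J t] unfolding n_def by blast
  then obtain A k where A: "\<And>i l. A i l \<in> J" and k: "\<And>i. k i \<in> K"
    and tx: "\<And>i. scale t (xs ! i) = (\<Sum>l = 0..<n. scale (A i l) (xs ! l)) + k i"
    by metis
  define B where "B = mat n n (\<lambda>(i, l). (if i = l then t else 0) - A i l)"
  have B: "B \<in> carrier_mat n n" unfolding B_def by simp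
  have "(\<Sum>l = 0..<n. scale (B $$ (i, l)) (xs ! l)) \<in> K" if i: "i < n" for i
  proof -
    have "(\<Sum>l = 0..<n. scale (B $$ (i, l)) (xs ! l))
        = (\<Sum>l = 0..<n. (if i = l then scale t (xs ! l) else 0) - scale (A i l) (xs ! l))"
      by (rule sum.cong) (auto simp: B_def i scale_left_diff_distrib)
    also have "\<dots> = k i" using i tx[of i] by (simp add: sum_subtractf)
    finally show ?thesis using k by simp
  qed
  then have detB_xs: "scale (Determinant.det B) (xs ! p) \<in> K" if "p < n" for p
    using det_scale_in_subspace[OF B K that] by blast
  have detB: "scale (Determinant.det B) m \<in> K" for m
  proof -
    obtain c where "m = (\<Sum>i = 0..<n. scale (c i) (xs ! i))"
      using span_set_nth[OF xs(1)] xs(2) unfolding n_def by blast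
    then have "scale (Determinant.det B) m
        = (\<Sum>i = 0..<n. scale (c i) (scale (Determinant.det B) (xs ! i)))"
      by (simp add: scale_sum_right mult.commute)
    also have "\<dots> \<in> K" by (intro subspace_sum[OF K] subspace_scale[OF K] detB_xs) simp
    finally show ?thesis .
  qed
  have "Determinant.det B - Determinant.det (t \<cdot>\<^sub>m 1\<^sub>m n) \<in> J"
    by (rule det_diff_in_ideal[OF J B]) (auto simp: B_def intro: ideal_uminus[OF J A])
  then have "Determinant.det B - t ^ n \<in> J" by simp
  then show thesis using that[of "Determinant.det B - t ^ n"] detB unfolding n_def by simp
qed

lemma determinant_trick:
  assumes S: "finite S" "span S = UNIV" and K: "subspace K" and J: "ideal J"
    and t: "\<And>m. scale t m \<in> span (K \<union> {scale j m | j m. j \<in> J})"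
  obtains n a where "n > 0" "a \<in> J" "\<And>m. scale (t ^ n + a) m \<in> K"
proof -
  obtain xs where xs: "set xs = S" "distinct xs" using finite_distinct_list[OF S(1)] by blast
  obtain a where a: "a \<in> J" "\<And>m. scale (t ^ length xs + a) m \<in> K"
    using determinant_trick_nth[OF xs(2) _ K J t] xs(1) S(2) by blast
  have "scale (t ^ Suc (length xs) + t * a) m \<in> K" for m
    using subspace_scale[OF K a(2), of t] by (simp add: scale_right_distrib distrib_left)
  then show thesis using that ideal_mult_left[OF J a(1)] by blast
qed

lemma mem_rad_if_scale_in_ideal_multiples:
  assumes S: "finite S" "span S = UNIV" and J: "ideal J" and ann: "colon scale {0} \<subseteq> J"
    and r: "\<And>m. scale r m \<in> span {scale j m | j m. j \<in> J}"
  shows "r \<in> rad J"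
proof -
  have "span {scale j m | j m. j \<in> J} \<subseteq> span ({0} \<union> {scale j m | j m. j \<in> J})"
    by (rule span_mono) blast
  then have r0: "scale r m \<in> span ({0} \<union> {scale j m | j m. j \<in> J})" for m
    using r by blast
  obtain n a where n: "n > 0" and a: "a \<in> J" and na: "\<And>m. scale (r ^ n + a) m \<in> {0}"
    using determinant_trick[OF S subspace_single_0 J r0] by blast
  then have "r ^ n + a \<in> J" using na ann unfolding colon_def by auto
  then have "(r ^ n + a) - a \<in> J" using ideal_diff[OF J _ a] by blast
  then have "r ^ n \<in> J" by simp
  then show ?thesis unfolding rad_def using n by blast
qed

lemma rad_colon_subset_if_subset_span:
  assumes S: "finite S" "span S = UNIV" and Q: "subspace Q"
    and L: "L \<subseteq> span {scale j m | j m. j \<in> rad (colon scale Q)}"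
  shows "rad (colon scale L) \<subseteq> rad (colon scale Q)"
proof
  fix y assume "y \<in> rad (colon scale L)"
  then obtain n where n: "n > 0" "y ^ n \<in> colon scale L" unfolding rad_def by blast
  have J: "ideal (rad (colon scale Q))" by (rule ideal_rad[OF ideal_colon[OF Q]])
  have "colon scale {0} \<subseteq> colon scale Q" by (rule colon_mono) (simp add: subspace_0[OF Q])
  then have "colon scale {0} \<subseteq> rad (colon scale Q)" using rad_superset by (rule order_trans)
  moreover have "scale (y ^ n) m \<in> span {scale j m | j m. j \<in> rad (colon scale Q)}" for m
    using n(2) L unfolding colon_def by blast
  ultimately have "y ^ n \<in> rad (rad (colon scale Q))"
    by (rule mem_rad_if_scale_in_ideal_multiples[OF S J])
  then have "y ^ n \<in> rad (colon scale Q)" by (simp only: rad_rad)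
  then show "y \<in> rad (colon scale Q)" by (rule power_in_radD[OF _ n(1)])
qed

lemma Union_chain_neq_UNIV:
  assumes S: "finite S" "span S = UNIV" and C: "C \<noteq> {}" "subset.chain \<A> C"
    and proper: "\<And>N. N \<in> C \<Longrightarrow> subspace N \<and> N \<noteq> UNIV"
  shows "\<Union>C \<noteq> UNIV"
proof
  assume "\<Union>C = UNIV"
  then obtain N where N: "N \<in> C" "S \<subseteq> N"
    using finite_subset_Union_chain[OF S(1) _ C] by (metis top_greatest)
  have "UNIV = span S" using S(2) by simp
  also have "\<dots> \<subseteq> N" using span_minimal[OF N(2)] proper[OF N(1)] by blast
  finally show False using proper[OF N(1)] by blast
qed

end

section \<open>Graded submodules and graded ideals\<close>

lemma graded_ideal_iff_graded_submodule: "graded_ideal RG I \<longleftrightarrow> graded_submodule (*) RG I"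
  unfolding graded_ideal_def graded_submodule_def Modules.module.subspace_def[OF module_mult] by auto

lemma graded_ideal_imp_ideal: "graded_ideal RG I \<Longrightarrow> ideal I"
  unfolding graded_ideal_def ideal_def by blast

lemma graded_radical_mono_rad:
  "rad I \<subseteq> rad J \<Longrightarrow> graded_radical RG I \<subseteq> graded_radical RG J"
  unfolding graded_radical_def rad_def by blast

lemma graded_radical_mono: "I \<subseteq> J \<Longrightarrow> graded_radical RG I \<subseteq> graded_radical RG J"
  unfolding graded_radical_def by blast

locale gmod =
  fixes smul :: "'r::comm_ring_1 \<Rightarrow> 'm::ab_group_add \<Rightarrow> 'm"
    and RG :: "'g::group_add \<Rightarrow> 'r set"
    and MG :: "'g \<Rightarrow> 'm set"
  assumes graded_module: "graded_module smul RG MG"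
begin

sublocale M: Modules.module smul
  using graded_module unfolding graded_module_def by blast

lemma internal_direct_sum_RG: "internal_direct_sum RG"
  using graded_module unfolding graded_module_def graded_ring_def by blast

lemma internal_direct_sum_MG: "internal_direct_sum MG"
  using graded_module unfolding graded_module_def by blast

lemma mult_degree: "a \<in> RG g \<Longrightarrow> b \<in> RG h \<Longrightarrow> a * b \<in> RG (g + h)"
  using graded_module unfolding graded_module_def graded_ring_def by blast

lemma smul_degree: "a \<in> RG g \<Longrightarrow> m \<in> MG h \<Longrightarrow> smul a m \<in> MG (g + h)"
  using graded_module unfolding graded_module_def by blast

lemma homog_mult: "a \<in> homog RG \<Longrightarrow> b \<in> homog RG \<Longrightarrow> a * b \<in> homog RG"
  unfolding homog_def using mult_degree by blast

lemma homog_power: "a \<in> homog RG \<Longrightarrow> n > 0 \<Longrightarrow> a ^ n \<in> homog RG"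
proof (induction n)
  case (Suc n)
  then show ?case by (cases "n = 0") (auto intro: homog_mult)
qed simp

lemma homog_smul: "a \<in> homog RG \<Longrightarrow> m \<in> homog MG \<Longrightarrow> smul a m \<in> homog MG"
  unfolding homog_def using smul_degree by blast

lemma homog_decomp_R:
  obtains xs where "set xs \<subseteq> homog RG" "r = sum_list xs"
proof -
  obtain c where c: "hdecomp RG r c"
    by (rule internal_direct_sum_obtain_hdecomp[OF internal_direct_sum_RG])
  have "c g \<in> homog RG" for g using hdecomp_component[OF c] by (rule homogI)
  then show thesis by (rule hdecomp_sum_list[OF c _ that])
qed

lemma homog_decomp_M:
  obtains xs where "set xs \<subseteq> homog MG" "m = sum_list xs"
proof -
  obtain c where c: "hdecomp MG m c"
    by (rule internal_direct_sum_obtain_hdecomp[OF internal_direct_sum_MG])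
  have "c g \<in> homog MG" for g using hdecomp_component[OF c] by (rule homogI)
  then show thesis by (rule hdecomp_sum_list[OF c _ that])
qed

lemma graded_submodule_iff:
  "graded_submodule smul MG N \<longleftrightarrow>
     M.subspace N \<and> (\<forall>x\<in>N. \<exists>xs. set xs \<subseteq> homog MG \<inter> N \<and> x = sum_list xs)"
proof
  assume N: "graded_submodule smul MG N"
  have sub: "M.subspace N" and dec: "\<And>x. x \<in> N \<Longrightarrow> \<exists>c. hdecomp (\<lambda>g. MG g \<inter> N) x c"
    using N unfolding graded_submodule_def graded_set_def by auto
  have "\<exists>xs. set xs \<subseteq> homog MG \<inter> N \<and> x = sum_list xs" if x: "x \<in> N" for x
  proof -
    obtain c where c: "hdecomp (\<lambda>g. MG g \<inter> N) x c" using dec[OF x] by (elim exE)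
    have "c g \<in> homog MG \<inter> N" for g
      using hdecomp_component[OF c, of g] by (auto intro: homogI)
    then obtain xs where "set xs \<subseteq> homog MG \<inter> N" "x = sum_list xs"
      by (rule hdecomp_sum_list[OF c])
    then show ?thesis by blast
  qed
  with sub show "M.subspace N \<and> (\<forall>x\<in>N. \<exists>xs. set xs \<subseteq> homog MG \<inter> N \<and> x = sum_list xs)"
    by blast
next
  assume "M.subspace N \<and> (\<forall>x\<in>N. \<exists>xs. set xs \<subseteq> homog MG \<inter> N \<and> x = sum_list xs)"
  then have N: "M.subspace N" and dec: "\<And>x. x \<in> N \<Longrightarrow> \<exists>xs. set xs \<subseteq> homog MG \<inter> N \<and> x = sum_list xs"
    by auto
  have "\<exists>c. hdecomp (\<lambda>g. MG g \<inter> N) x c" if x: "x \<in> N" for x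
  proof -
    obtain xs where xs: "set xs \<subseteq> homog MG \<inter> N" "x = sum_list xs" using dec[OF x] by (elim exE conjE)
    have "\<exists>c. hdecomp (\<lambda>g. MG g \<inter> N) (sum_list xs) c"
      proof (rule sum_list_hdecomp)
      show "0 \<in> MG g \<inter> N" for g
        by (intro IntI internal_direct_sum_zero[OF internal_direct_sum_MG] M.subspace_0[OF N])
      show "a + b \<in> MG g \<inter> N" if "a \<in> MG g \<inter> N" "b \<in> MG g \<inter> N" for g a b
        using that by (intro IntI internal_direct_sum_add[OF internal_direct_sum_MG] M.subspace_add[OF N]) auto
      show "set xs \<subseteq> (\<Union>g. MG g \<inter> N)" using xs(1) unfolding homog_def by blast
    qed
    then show ?thesis using xs(2) by simp
  qed
  with N show "graded_submodule smul MG N"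
    unfolding graded_submodule_def graded_set_def by blast
qed

lemma graded_submodule_subspace: "graded_submodule smul MG N \<Longrightarrow> M.subspace N"
  unfolding graded_submodule_def by blast

lemma graded_submodule_homog_decomp:
  assumes "graded_submodule smul MG N" "x \<in> N"
  obtains xs where "set xs \<subseteq> homog MG \<inter> N" "x = sum_list xs"
  using assms unfolding graded_submodule_iff by blast

lemma graded_submodule_component:
  assumes N: "graded_submodule smul MG N" and "x \<in> N" "hdecomp MG x d"
  shows "d g \<in> N"
proof -
  obtain c where c: "hdecomp (\<lambda>g. MG g \<inter> N) x c"
    using assms unfolding graded_submodule_def graded_set_def by blast
  have "hdecomp MG x c" by (rule hdecomp_mono[OF c]) auto
  then have "c = d" using internal_direct_sum_hdecomp_unique[OF internal_direct_sum_MG] assms(3) by blast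
  then show ?thesis using hdecomp_component[OF c] by blast
qed

lemma subspace_homog_sums:
  assumes N: "M.subspace N"
  shows "M.subspace {x. \<exists>xs. set xs \<subseteq> homog MG \<inter> N \<and> x = sum_list xs}"
  unfolding M.subspace_def
proof (intro conjI ballI allI)
  show "0 \<in> {x. \<exists>xs. set xs \<subseteq> homog MG \<inter> N \<and> x = sum_list xs}"
    by (intro CollectI exI[of _ "[]"]) auto
next
  fix x y assume "x \<in> {x. \<exists>xs. set xs \<subseteq> homog MG \<inter> N \<and> x = sum_list xs}"
    "y \<in> {x. \<exists>xs. set xs \<subseteq> homog MG \<inter> N \<and> x = sum_list xs}"
  then obtain xs ys where "set xs \<subseteq> homog MG \<inter> N" "x = sum_list xs"
    "set ys \<subseteq> homog MG \<inter> N" "y = sum_list ys" by blast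
  then show "x + y \<in> {x. \<exists>xs. set xs \<subseteq> homog MG \<inter> N \<and> x = sum_list xs}"
    by (intro CollectI exI[of _ "xs @ ys"]) auto
next
  fix c x assume "x \<in> {x. \<exists>xs. set xs \<subseteq> homog MG \<inter> N \<and> x = sum_list xs}"
  then obtain xs where xs: "set xs \<subseteq> homog MG \<inter> N" "x = sum_list xs" by blast
  obtain cs where cs: "set cs \<subseteq> homog RG" "c = sum_list cs" by (rule homog_decomp_R)
  have "smul c x = sum_list (concat (map (\<lambda>a. map (smul a) xs) cs))"
    using xs cs M.scale_sum_list_sum_list by simp
  moreover have "set (concat (map (\<lambda>a. map (smul a) xs) cs)) \<subseteq> homog MG \<inter> N"
    using xs(1) cs(1) by (auto intro: homog_smul M.subspace_scale[OF N])
  ultimately show "smul c x \<in> {x. \<exists>xs. set xs \<subseteq> homog MG \<inter> N \<and> x = sum_list xs}" by blast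
qed

lemma graded_submodule_span:
  assumes "\<And>x. x \<in> X \<Longrightarrow> \<exists>xs. set xs \<subseteq> homog MG \<inter> M.span X \<and> x = sum_list xs"
  shows "graded_submodule smul MG (M.span X)"
proof -
  have "M.span X \<subseteq> {x. \<exists>xs. set xs \<subseteq> homog MG \<inter> M.span X \<and> x = sum_list xs}"
    by (rule M.span_minimal[OF _ subspace_homog_sums[OF M.subspace_span]]) (use assms in blast)
  then show ?thesis unfolding graded_submodule_iff by blast
qed

lemma graded_submodule_span_homog:
  assumes "X \<subseteq> homog MG"
  shows "graded_submodule smul MG (M.span X)"
proof (rule graded_submodule_span)
  fix x assume "x \<in> X"
  then have "x \<in> homog MG \<inter> M.span X" using assms M.span_base by blast
  then show "\<exists>xs. set xs \<subseteq> homog MG \<inter> M.span X \<and> x = sum_list xs"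
    by (intro exI[of _ "[x]"]) auto
qed

lemma graded_submodule_span_insert:
  assumes K: "graded_submodule smul MG K" and m: "m \<in> homog MG"
  shows "graded_submodule smul MG (M.span (insert m K))"
proof (rule graded_submodule_span)
  have sub: "insert m K \<subseteq> M.span (insert m K)" by (rule M.span_superset)
  fix w assume "w \<in> insert m K"
  then consider "w = m" | "w \<in> K" by blast
  then show "\<exists>xs. set xs \<subseteq> homog MG \<inter> M.span (insert m K) \<and> w = sum_list xs"
  proof cases
    case 1
    then show ?thesis using m sub by (intro exI[of _ "[m]"]) auto
  next
    case 2
    then obtain xs where "set xs \<subseteq> homog MG \<inter> K" "w = sum_list xs"
      by (rule graded_submodule_homog_decomp[OF K])
    then show ?thesis using sub by blast
  qed
qed

lemma graded_submodule_Int: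
  assumes "graded_submodule smul MG N1" "graded_submodule smul MG N2"
  shows "graded_submodule smul MG (N1 \<inter> N2)"
proof -
  have "\<exists>xs. set xs \<subseteq> homog MG \<inter> (N1 \<inter> N2) \<and> x = sum_list xs" if x: "x \<in> N1 \<inter> N2" for x
  proof -
    obtain c where c: "hdecomp MG x c"
      by (rule internal_direct_sum_obtain_hdecomp[OF internal_direct_sum_MG])
    have "c g \<in> homog MG \<inter> (N1 \<inter> N2)" for g
      using x graded_submodule_component[OF _ _ c] assms homogI[of "c g" MG g] hdecomp_component[OF c]
      by blast
    then obtain xs where "set xs \<subseteq> homog MG \<inter> (N1 \<inter> N2)" "x = sum_list xs"
      by (rule hdecomp_sum_list[OF c])
    then show ?thesis by blast
  qed
  moreover have "M.subspace (N1 \<inter> N2)"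
    using assms by (simp add: graded_submodule_subspace M.subspace_inter)
  ultimately show ?thesis unfolding graded_submodule_iff by blast
qed

lemma graded_submodule_UNIV: "graded_submodule smul MG UNIV"
  unfolding graded_submodule_iff by (metis M.subspace_UNIV Int_UNIV_right homog_decomp_M)

lemma graded_submodule_Union_chain:
  assumes C: "C \<noteq> {}" "subset.chain {N. graded_submodule smul MG N} C"
  shows "graded_submodule smul MG (\<Union>C)"
proof -
  have gr: "\<And>N. N \<in> C \<Longrightarrow> graded_submodule smul MG N"
    and ch: "\<And>X Y. X \<in> C \<Longrightarrow> Y \<in> C \<Longrightarrow> X \<subseteq> Y \<or> Y \<subseteq> X"
    using C(2) unfolding subset.chain_def by blast+
  note sub = graded_submodule_subspace[OF gr]
  have "M.subspace (\<Union>C)" unfolding M.subspace_def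
  proof (intro conjI ballI allI)
    show "0 \<in> \<Union>C" using C(1) M.subspace_0[OF sub] by blast
  next
    fix x y assume "x \<in> \<Union>C" "y \<in> \<Union>C"
    then obtain X Y where XY: "X \<in> C" "Y \<in> C" "x \<in> X" "y \<in> Y" by blast
    then show "x + y \<in> \<Union>C"
      using ch[OF XY(1,2)] M.subspace_add[OF sub[OF XY(1)]] M.subspace_add[OF sub[OF XY(2)]] by blast
  next
    fix c x assume "x \<in> \<Union>C"
    then show "smul c x \<in> \<Union>C" using M.subspace_scale[OF sub] by blast
  qed
  moreover have "\<exists>xs. set xs \<subseteq> homog MG \<inter> \<Union>C \<and> x = sum_list xs" if "x \<in> \<Union>C" for x
  proof -
    from that obtain X where X: "X \<in> C" "x \<in> X" by blast
    then obtain xs where "set xs \<subseteq> homog MG \<inter> X" "x = sum_list xs"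
      using graded_submodule_homog_decomp[OF gr] by blast
    then show ?thesis using X(1) by blast
  qed
  ultimately show ?thesis unfolding graded_submodule_iff by blast
qed

lemma gmod_ring: "gmod ((*) :: 'r \<Rightarrow> 'r \<Rightarrow> 'r) RG RG"
  using graded_module module_mult internal_direct_sum_RG mult_degree
  unfolding gmod_def graded_module_def by blast

lemma graded_ideal_homog_decomp:
  assumes "graded_ideal RG I" "x \<in> I"
  obtains xs where "set xs \<subseteq> homog RG \<inter> I" "x = sum_list xs"
  using gmod.graded_submodule_homog_decomp[OF gmod_ring] assms graded_ideal_iff_graded_submodule
  by metis

lemma graded_ideal_subset:
  assumes I: "graded_ideal RG I" and P: "ideal P" and hom: "\<And>x. x \<in> homog RG \<Longrightarrow> x \<in> I \<Longrightarrow> x \<in> P"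
  shows "I \<subseteq> P"
proof
  fix x assume "x \<in> I"
  then obtain xs where xs: "set xs \<subseteq> homog RG \<inter> I" "x = sum_list xs"
    by (rule graded_ideal_homog_decomp[OF I])
  have "set xs \<subseteq> P" using xs(1) hom by blast
  then show "x \<in> P"
    using module.subspace_sum_list[OF module_mult] P xs(2) unfolding ideal_iff_subspace by blast
qed

lemma graded_ideal_UNIV: "graded_ideal RG UNIV"
  using gmod.graded_submodule_UNIV[OF gmod_ring] graded_ideal_iff_graded_submodule by blast

lemma obtain_homog_not_in:
  assumes "graded_ideal RG p" "p \<noteq> UNIV"
  obtains s where "s \<in> homog RG" "s \<notin> p"
  using graded_ideal_subset[OF graded_ideal_UNIV graded_ideal_imp_ideal[OF assms(1)]] assms(2) by blast

lemma graded_ideal_Union_chain: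
  assumes "C \<noteq> {}" "subset.chain {J. graded_ideal RG J} C"
  shows "graded_ideal RG (\<Union>C)"
  using gmod.graded_submodule_Union_chain[OF gmod_ring assms(1)] assms(2)
  unfolding graded_ideal_iff_graded_submodule by simp

lemma smul_mem_subspace_if_homog:
  assumes I: "graded_ideal RG I" and N: "M.subspace N" and r: "r \<in> I"
    and hom: "\<And>a m. a \<in> homog RG \<Longrightarrow> a \<in> I \<Longrightarrow> m \<in> homog MG \<Longrightarrow> smul a m \<in> N"
  shows "smul r m \<in> N"
proof -
  obtain rs where rs: "set rs \<subseteq> homog RG \<inter> I" "r = sum_list rs"
    by (rule graded_ideal_homog_decomp[OF I r])
  obtain ms where ms: "set ms \<subseteq> homog MG" "m = sum_list ms" by (rule homog_decomp_M)
  have "smul r m = sum_list (concat (map (\<lambda>a. map (smul a) ms) rs))"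
    using rs ms M.scale_sum_list_sum_list by simp
  also have "\<dots> \<in> N" using rs(1) ms(1) by (intro M.subspace_sum_list[OF N]) (auto intro!: hom)
  finally show ?thesis .
qed

lemma mem_colon_if_homog:
  assumes N: "M.subspace N" and hom: "\<And>m. m \<in> homog MG \<Longrightarrow> smul r m \<in> N"
  shows "r \<in> colon smul N"
  unfolding colon_def
proof (intro CollectI allI)
  fix m
  obtain ms where ms: "set ms \<subseteq> homog MG" "m = sum_list ms" by (rule homog_decomp_M)
  have "smul r m = sum_list (map (smul r) ms)" using ms(2) M.scale_sum_list_right by simp
  also have "\<dots> \<in> N" using ms(1) hom by (intro M.subspace_sum_list[OF N]) auto
  finally show "smul r m \<in> N" .
qed

lemma colon_eq_UNIV_iff: "colon smul N = UNIV \<longleftrightarrow> N = UNIV"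
proof
  assume "colon smul N = UNIV"
  then have "smul 1 m \<in> N" for m unfolding colon_def by blast
  then show "N = UNIV" by auto
qed (simp add: colon_def)

lemma graded_ideal_colon:
  assumes N: "graded_submodule smul MG N"
  shows "graded_ideal RG (colon smul N)"
proof -
  have sub: "M.subspace N" by (rule graded_submodule_subspace[OF N])
  have "\<exists>c. hdecomp (\<lambda>g. RG g \<inter> colon smul N) r c" if r: "r \<in> colon smul N" for r
  proof -
    obtain c where c: "hdecomp RG r c"
      by (rule internal_direct_sum_obtain_hdecomp[OF internal_direct_sum_RG])
    have "c g \<in> colon smul N" for g
    proof (rule mem_colon_if_homog[OF sub])
      fix m assume "m \<in> homog MG"
      then obtain h where h: "m \<in> MG h" by (rule homogE)
      have hd: "hdecomp MG (smul r m) (\<lambda>k. smul (c (k - h)) m)"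
      proof (rule hdecomp_shift[OF c, where \<phi> = "\<lambda>g. g + h"])
        show "smul (a + b) m = smul a m + smul b m" for a b by (rule M.scale_left_distrib)
        show "smul a m \<in> MG (g + h)" if "a \<in> RG g" for g a by (rule smul_degree[OF that h])
      qed (auto simp: algebra_simps)
      have "smul r m \<in> N" using r unfolding colon_def by blast
      from graded_submodule_component[OF N this hd, of "g + h"] show "smul (c g) m \<in> N" by simp
    qed
    then have "hdecomp (\<lambda>g. RG g \<inter> colon smul N) r c" using c unfolding hdecomp_def by blast
    then show ?thesis by blast
  qed
  then show ?thesis using M.ideal_colon[OF sub] unfolding graded_ideal_def graded_set_def ideal_def by blast
qed

lemma graded_radical_hdecomp_iff:
  assumes c: "hdecomp RG x c"
  shows "x \<in> graded_radical RG I \<longleftrightarrow> (\<forall>g. c g \<in> rad I)"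
proof
  assume "x \<in> graded_radical RG I"
  then obtain d where d: "hdecomp RG x d" "\<forall>g. \<exists>n>0. d g ^ n \<in> I"
    unfolding graded_radical_def by blast
  have "d = c" by (rule internal_direct_sum_hdecomp_unique[OF internal_direct_sum_RG d(1) c])
  then show "\<forall>g. c g \<in> rad I" using d(2) unfolding rad_def by blast
next
  assume "\<forall>g. c g \<in> rad I"
  then show "x \<in> graded_radical RG I" using c unfolding graded_radical_def rad_def by blast
qed

lemma graded_radical_homog_iff:
  assumes I: "ideal I" and a: "a \<in> homog RG"
  shows "a \<in> graded_radical RG I \<longleftrightarrow> a \<in> rad I"
proof -
  obtain g where "a \<in> RG g" using a by (rule homogE)
  then have c: "hdecomp RG a (\<lambda>h. if h = g then a else 0)"
    by (intro hdecomp_singleton internal_direct_sum_zero[OF internal_direct_sum_RG])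
  have "0 \<in> rad I" using ideal_0[OF I] rad_superset by blast
  then show ?thesis unfolding graded_radical_hdecomp_iff[OF c] by auto
qed

lemma graded_ideal_subset_graded_radical:
  assumes I: "graded_ideal RG I"
  shows "I \<subseteq> graded_radical RG I"
proof
  fix x assume x: "x \<in> I"
  obtain c where c: "hdecomp RG x c"
    by (rule internal_direct_sum_obtain_hdecomp[OF internal_direct_sum_RG])
  have "c g \<in> I" for g
    using gmod.graded_submodule_component[OF gmod_ring _ x c] I graded_ideal_iff_graded_submodule by blast
  then show "x \<in> graded_radical RG I" unfolding graded_radical_hdecomp_iff[OF c] using rad_superset by blast
qed

lemma graded_radical_subset_rad:
  assumes I: "ideal I"
  shows "graded_radical RG I \<subseteq> rad I"
proof
  fix x assume x: "x \<in> graded_radical RG I"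
  obtain c where c: "hdecomp RG x c"
    by (rule internal_direct_sum_obtain_hdecomp[OF internal_direct_sum_RG])
  have "sum c {g. c g \<noteq> 0} \<in> rad I"
    using x unfolding graded_radical_hdecomp_iff[OF c] by (intro ideal_sum[OF ideal_rad[OF I]]) blast
  then show "x \<in> rad I" using c unfolding hdecomp_def by simp
qed

lemma graded_radical_UNIV: "graded_radical RG UNIV = UNIV"
  using graded_ideal_subset_graded_radical[OF graded_ideal_UNIV] by blast

lemma obtain_homog_not_in_rad:
  assumes "\<not> graded_radical RG I \<subseteq> graded_radical RG J"
  obtains a where "a \<in> homog RG" "a \<in> I" "a \<notin> rad J"
proof -
  obtain x where x: "x \<in> graded_radical RG I" "x \<notin> graded_radical RG J" using assms by blast
  obtain c where c: "hdecomp RG x c"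
    by (rule internal_direct_sum_obtain_hdecomp[OF internal_direct_sum_RG])
  obtain g where g: "c g \<notin> rad J" using x(2) unfolding graded_radical_hdecomp_iff[OF c] by blast
  obtain n where n: "n > 0" "c g ^ n \<in> I"
    using x(1) unfolding graded_radical_hdecomp_iff[OF c] rad_def by blast
  have "c g ^ n \<in> homog RG"
    by (rule homog_power[OF homogI[of "c g" RG g, OF hdecomp_component[OF c]] n(1)])
  moreover have "c g ^ n \<notin> rad J" using g power_in_radD n(1) by blast
  ultimately show thesis using that n(2) by blast
qed

lemma graded_prime_ideal_power:
  assumes p: "graded_prime_ideal RG p" and t: "t \<in> homog RG"
  shows "n > 0 \<Longrightarrow> t ^ n \<in> p \<Longrightarrow> t \<in> p"
proof (induction n)
  case (Suc n)
  show ?case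
  proof (cases "n = 0")
    case False
    have "t * t ^ n \<in> p" using Suc.prems by simp
    then have "t \<in> p \<or> t ^ n \<in> p"
      using p t homog_power[OF t] False unfolding graded_prime_ideal_def by blast
    then show ?thesis using Suc.IH False by blast
  qed (use Suc.prems in simp)
qed simp

lemma graded_radical_graded_prime_ideal:
  assumes p: "graded_prime_ideal RG p"
  shows "graded_radical RG p = p"
proof
  have pg: "graded_ideal RG p" using p unfolding graded_prime_ideal_def by blast
  show "graded_radical RG p \<subseteq> p"
  proof
    fix x assume x: "x \<in> graded_radical RG p"
    obtain c where c: "hdecomp RG x c"
      by (rule internal_direct_sum_obtain_hdecomp[OF internal_direct_sum_RG])
    have "c g \<in> p" for g
    proof -
      obtain n where "n > 0" "c g ^ n \<in> p"
        using x unfolding graded_radical_hdecomp_iff[OF c] rad_def by blast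
      then show ?thesis
        using graded_prime_ideal_power[OF p homogI[of "c g" RG g, OF hdecomp_component[OF c]]] by blast
    qed
    then have "sum c {g. c g \<noteq> 0} \<in> p" by (intro ideal_sum[OF graded_ideal_imp_ideal[OF pg]])
    then show "x \<in> p" using c unfolding hdecomp_def by simp
  qed
  show "p \<subseteq> graded_radical RG p" by (rule graded_ideal_subset_graded_radical[OF pg])
qed

section \<open>Graded primes and quasi-primary submodules\<close>

lemma graded_prime_ideal_if_maximal_avoiding_powers:
  assumes P: "graded_ideal RG P" and nb: "\<forall>n>0. b ^ n \<notin> P"
    and max: "\<And>J. graded_ideal RG J \<Longrightarrow> P \<subseteq> J \<Longrightarrow> \<forall>n>0. b ^ n \<notin> J \<Longrightarrow> J = P"
  shows "graded_prime_ideal RG P"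
proof -
  have Pi: "ideal P" by (rule graded_ideal_imp_ideal[OF P])
  have power_modulo: "\<exists>n>0. \<exists>k. b ^ n - k * z \<in> P" if z: "z \<in> homog RG" "z \<notin> P" for z
  proof -
    let ?J = "Modules.module.span (*) (insert z P)"
    have gJ: "graded_ideal RG ?J"
      using gmod.graded_submodule_span_insert[OF gmod_ring _ z(1)] P
      unfolding graded_ideal_iff_graded_submodule by blast
    have "insert z P \<subseteq> ?J" by (rule module.span_superset[OF module_mult])
    then have "\<not> (\<forall>n>0. b ^ n \<notin> ?J)" using max[OF gJ] z(2) by blast
    then obtain n where n: "n > 0" "b ^ n \<in> ?J" by blast
    then obtain k where "b ^ n - k * z \<in> Modules.module.span (*) P"
      unfolding module.span_breakdown_eq[OF module_mult] by blast
    moreover have "Modules.module.span (*) P = P"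
      using Pi module.span_eq_iff[OF module_mult] unfolding ideal_iff_subspace by blast
    ultimately show ?thesis using n(1) by auto
  qed
  have "x \<in> P \<or> y \<in> P" if xy: "x \<in> homog RG" "y \<in> homog RG" "x * y \<in> P" for x y
  proof (rule ccontr)
    assume "\<not> (x \<in> P \<or> y \<in> P)"
    then obtain n k m l where n: "n > 0" "b ^ n - k * x \<in> P" and m: "m > 0" "b ^ m - l * y \<in> P"
      using power_modulo xy(1,2) by meson
    have "b ^ (n + m) = (b ^ n - k * x) * b ^ m + (k * x) * (b ^ m - l * y) + (k * l) * (x * y)"
      unfolding power_add by (simp add: left_diff_distrib right_diff_distrib mult_ac)
    also have "\<dots> \<in> P"
    proof -
      have "(b ^ n - k * x) * b ^ m \<in> P" by (rule ideal_mult_right[OF Pi n(2)])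
      moreover have "(k * x) * (b ^ m - l * y) \<in> P" by (rule ideal_mult_left[OF Pi m(2)])
      moreover have "(k * l) * (x * y) \<in> P" by (rule ideal_mult_left[OF Pi xy(3)])
      ultimately show ?thesis by (intro ideal_add[OF Pi])
    qed
    finally show False using nb n(1) by simp
  qed
  moreover have "P \<noteq> UNIV" using nb[rule_format, of 1] by auto
  ultimately show ?thesis using P unfolding graded_prime_ideal_def by blast
qed

lemma obtain_graded_prime_ideal_avoiding_powers:
  assumes I: "graded_ideal RG I" and nb: "\<forall>n>0. b ^ n \<notin> I"
  obtains p where "graded_prime_ideal RG p" "I \<subseteq> p" "b \<notin> p"
proof -
  define \<A> where "\<A> = {J. graded_ideal RG J \<and> I \<subseteq> J \<and> (\<forall>n>0. b ^ n \<notin> J)}"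
  have "\<exists>P\<in>\<A>. \<forall>J\<in>\<A>. P \<subseteq> J \<longrightarrow> J = P"
  proof (rule subset_Zorn_nonempty)
    show "\<A> \<noteq> {}" using I nb unfolding \<A>_def by blast
    fix C assume C: "C \<noteq> {}" "subset.chain \<A> C"
    then have "subset.chain {J. graded_ideal RG J} C" unfolding \<A>_def subset.chain_def by blast
    then have "graded_ideal RG (\<Union>C)" by (rule graded_ideal_Union_chain[OF C(1)])
    then show "\<Union>C \<in> \<A>" using C unfolding \<A>_def subset.chain_def by blast
  qed
  then obtain P where "P \<in> \<A>" and max: "\<And>J. J \<in> \<A> \<Longrightarrow> P \<subseteq> J \<Longrightarrow> J = P" by blast
  then have P: "graded_ideal RG P" "I \<subseteq> P" "\<forall>n>0. b ^ n \<notin> P" unfolding \<A>_def by blast+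
  have "J = P" if "graded_ideal RG J" "P \<subseteq> J" "\<forall>n>0. b ^ n \<notin> J" for J
    using max[of J] that P(2) unfolding \<A>_def by blast
  then have "graded_prime_ideal RG P"
    by (rule graded_prime_ideal_if_maximal_avoiding_powers[OF P(1,3)])
  moreover have "b \<notin> P" using P(3)[rule_format, of 1] by simp
  ultimately show thesis using that P(2) by blast
qed

lemma graded_prime_ideal_colon:
  assumes P: "graded_prime_submodule smul RG MG P"
  shows "graded_prime_ideal RG (colon smul P)"
proof -
  have Pg: "graded_submodule smul MG P" and PU: "P \<noteq> UNIV"
    and pr: "\<And>r m. r \<in> homog RG \<Longrightarrow> m \<in> homog MG \<Longrightarrow> smul r m \<in> P \<Longrightarrow> m \<in> P \<or> r \<in> colon smul P"
    using P unfolding graded_prime_submodule_def by blast+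
  have "a \<in> colon smul P \<or> b \<in> colon smul P"
    if a: "a \<in> homog RG" and b: "b \<in> homog RG" and ab: "a * b \<in> colon smul P" for a b
  proof (rule disjCI)
    assume "b \<notin> colon smul P"
    then obtain m where m: "m \<in> homog MG" "smul b m \<notin> P"
      using mem_colon_if_homog[OF graded_submodule_subspace[OF Pg]] by blast
    have "smul a (smul b m) \<in> P" using ab unfolding colon_def by simp
    then show "a \<in> colon smul P" using pr[OF a homog_smul[OF b m(1)]] m(2) by blast
  qed
  moreover have "colon smul P \<noteq> UNIV" using PU colon_eq_UNIV_iff by blast
  ultimately show ?thesis using graded_ideal_colon[OF Pg] unfolding graded_prime_ideal_def by blast
qed

lemma graded_prime_imp_quasi_primary:
  assumes P: "graded_prime_submodule smul RG MG P"
  shows "graded_quasi_primary smul RG MG P"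
proof -
  have Pg: "graded_submodule smul MG P"
    using P unfolding graded_prime_submodule_def by blast
  have "P \<subseteq> graded_M_radical smul RG MG P" unfolding graded_M_radical_def by blast
  moreover have "colon smul P \<subseteq> graded_radical RG (colon smul P)"
    by (rule graded_ideal_subset_graded_radical[OF graded_ideal_colon[OF Pg]])
  ultimately show ?thesis
    using P unfolding graded_quasi_primary_def graded_prime_submodule_def by blast
qed

lemma graded_prime_submodule_Int:
  assumes P: "graded_prime_submodule smul RG MG P" and P': "graded_prime_submodule smul RG MG P'"
    and eq: "colon smul P = colon smul P'"
  shows "graded_prime_submodule smul RG MG (P \<inter> P')"
proof -
  have "m \<in> P \<inter> P' \<or> r \<in> colon smul (P \<inter> P')"
    if "r \<in> homog RG" "m \<in> homog MG" "smul r m \<in> P \<inter> P'" for r m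
    using that P P' eq unfolding graded_prime_submodule_def colon_Int by blast
  moreover have "graded_submodule smul MG (P \<inter> P')"
    using P P' graded_submodule_Int unfolding graded_prime_submodule_def by blast
  ultimately show ?thesis using P unfolding graded_prime_submodule_def by blast
qed

lemma qp_Spec_g_graded: "Q \<in> qp_Spec_g smul RG MG \<Longrightarrow> graded_submodule smul MG Q"
  unfolding qp_Spec_g_def graded_quasi_primary_def by blast

lemma qp_Spec_g_proper: "Q \<in> qp_Spec_g smul RG MG \<Longrightarrow> Q \<noteq> UNIV"
  unfolding qp_Spec_g_def graded_quasi_primary_def by blast

lemma qp_Spec_g_colon_mult_imp_rad:
  assumes Q: "Q \<in> qp_Spec_g smul RG MG" and a: "a \<in> homog RG" and b: "b \<in> homog RG"
    and ab: "a * b \<in> colon smul Q" and na: "a \<notin> rad (colon smul Q)"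
  shows "b \<in> rad (colon smul Q)"
proof (rule ccontr)
  assume nb: "b \<notin> rad (colon smul Q)"
  have Qg: "graded_submodule smul MG Q" by (rule qp_Spec_g_graded[OF Q])
  have cQ: "graded_ideal RG (colon smul Q)" by (rule graded_ideal_colon[OF Qg])
  have "\<forall>n>0. b ^ n \<notin> colon smul Q" using nb unfolding rad_def by blast
  then obtain p where p: "graded_prime_ideal RG p" "colon smul Q \<subseteq> p" "b \<notin> p"
    by (rule obtain_graded_prime_ideal_avoiding_powers[OF cQ])
  obtain P where P: "P \<in> Spec_g smul RG MG" "Q \<subseteq> P" "colon smul P = p"
    using Q p unfolding qp_Spec_g_def graded_primeful_def by blast
  have qp: "\<And>r m. r \<in> homog RG \<Longrightarrow> m \<in> homog MG \<Longrightarrow> smul r m \<in> Q \<Longrightarrow>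
      r \<in> graded_radical RG (colon smul Q) \<or> m \<in> graded_M_radical smul RG MG Q"
    using Q unfolding qp_Spec_g_def graded_quasi_primary_def by blast
  have "a \<notin> graded_radical RG (colon smul Q)"
    using graded_radical_homog_iff[OF graded_ideal_imp_ideal[OF cQ] a] na by blast
  moreover have "smul a (smul b m) \<in> Q" for m using ab unfolding colon_def by simp
  ultimately have "smul b m \<in> graded_M_radical smul RG MG Q" if "m \<in> homog MG" for m
    using qp[OF a homog_smul[OF b that]] by blast
  then have "smul b m \<in> P" if "m \<in> homog MG" for m
    using that P(1,2) unfolding graded_M_radical_def by blast
  moreover have "M.subspace P"
    using P(1) graded_submodule_subspace unfolding Spec_g_def graded_prime_submodule_def by blast
  ultimately have "b \<in> colon smul P" using mem_colon_if_homog by blast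
  then show False using P(3) p(3) by blast
qed

lemma qp_Spec_g_rad_colon_mult:
  assumes Q: "Q \<in> qp_Spec_g smul RG MG" and a: "a \<in> homog RG" and b: "b \<in> homog RG"
    and ab: "a * b \<in> rad (colon smul Q)"
  shows "a \<in> rad (colon smul Q) \<or> b \<in> rad (colon smul Q)"
proof (rule disjCI)
  assume na: "b \<notin> rad (colon smul Q)"
  obtain k where k: "k > 0" "(a * b) ^ k \<in> colon smul Q" using ab unfolding rad_def by blast
  have "b ^ k * a ^ k \<in> colon smul Q" using k(2) by (simp add: power_mult_distrib mult.commute)
  moreover have "b ^ k \<notin> rad (colon smul Q)" using na power_in_radD k(1) by blast
  ultimately have "a ^ k \<in> rad (colon smul Q)"
    by (rule qp_Spec_g_colon_mult_imp_rad[OF Q homog_power[OF b k(1)] homog_power[OF a k(1)]])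
  then show "a \<in> rad (colon smul Q)" using power_in_radD k(1) by blast
qed

section \<open>The quasi-Zariski topology\<close>

lemma qp_V_subset: "qp_V smul RG MG K \<subseteq> qp_Spec_g smul RG MG"
  unfolding qp_V_def by blast

lemma qp_V_Int:
  assumes K: "graded_submodule smul MG K" and L: "graded_submodule smul MG L"
  shows "qp_V smul RG MG (K \<inter> L) = qp_V smul RG MG K \<union> qp_V smul RG MG L"
proof
  show "qp_V smul RG MG (K \<inter> L) \<subseteq> qp_V smul RG MG K \<union> qp_V smul RG MG L"
  proof
    fix Q assume QKL: "Q \<in> qp_V smul RG MG (K \<inter> L)"
    then have Q: "Q \<in> qp_Spec_g smul RG MG" unfolding qp_V_def by blast
    show "Q \<in> qp_V smul RG MG K \<union> qp_V smul RG MG L"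
    proof (rule ccontr)
      assume "Q \<notin> qp_V smul RG MG K \<union> qp_V smul RG MG L"
      then have nK: "\<not> graded_radical RG (colon smul K) \<subseteq> graded_radical RG (colon smul Q)"
        and nL: "\<not> graded_radical RG (colon smul L) \<subseteq> graded_radical RG (colon smul Q)"
        using Q unfolding qp_V_def by blast+
      obtain a where a: "a \<in> homog RG" "a \<in> colon smul K" "a \<notin> rad (colon smul Q)"
        by (rule obtain_homog_not_in_rad[OF nK])
      obtain b where b: "b \<in> homog RG" "b \<in> colon smul L" "b \<notin> rad (colon smul Q)"
        by (rule obtain_homog_not_in_rad[OF nL])
      have IQ: "ideal (colon smul Q)"
        by (rule M.ideal_colon[OF graded_submodule_subspace[OF qp_Spec_g_graded[OF Q]]])
      have "a * b \<in> colon smul K"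
        by (rule ideal_mult_right[OF M.ideal_colon[OF graded_submodule_subspace[OF K]] a(2)])
      moreover have "a * b \<in> colon smul L"
        by (rule ideal_mult_left[OF M.ideal_colon[OF graded_submodule_subspace[OF L]] b(2)])
      ultimately have "a * b \<in> colon smul (K \<inter> L)" unfolding colon_Int by blast
      then have "a * b \<in> graded_radical RG (colon smul Q)"
        using graded_ideal_subset_graded_radical[OF graded_ideal_colon[OF graded_submodule_Int[OF K L]]]
          QKL unfolding qp_V_def by blast
      then have "a * b \<in> rad (colon smul Q)"
        using graded_radical_homog_iff[OF IQ homog_mult[OF a(1) b(1)]] by blast
      then show False using qp_Spec_g_rad_colon_mult[OF Q a(1) b(1)] a(3) b(3) by blast
    qed
  qed
  show "qp_V smul RG MG K \<union> qp_V smul RG MG L \<subseteq> qp_V smul RG MG (K \<inter> L)"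
    using graded_radical_mono[OF colon_mono[OF Int_lower1], of RG smul K L]
      graded_radical_mono[OF colon_mono[OF Int_lower2], of RG smul K L]
    unfolding qp_V_def by blast
qed

text \<open>The span of \<^term>\<open>colon_multiples \<K>\<close> is the submodule \<open>\<Sum>K\<in>\<K>. (K : M) M\<close>, presented
  by homogeneous generators.\<close>

definition colon_multiples :: "'m set set \<Rightarrow> 'm set" where
  "colon_multiples \<K> =
     {smul r m | r m. r \<in> homog RG \<and> m \<in> homog MG \<and> (\<exists>K\<in>\<K>. r \<in> colon smul K)}"

lemma colon_multiples_homog: "colon_multiples \<K> \<subseteq> homog MG"
  unfolding colon_multiples_def using homog_smul by blast

lemma colon_subset_colon_span_colon_multiples:
  assumes K: "K \<in> \<K>" "graded_submodule smul MG K"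
  shows "colon smul K \<subseteq> colon smul (M.span (colon_multiples \<K>))"
proof
  fix r assume r: "r \<in> colon smul K"
  have "smul r m \<in> M.span (colon_multiples \<K>)" for m
  proof (rule smul_mem_subspace_if_homog[OF graded_ideal_colon[OF K(2)] M.subspace_span r])
    fix a m assume "a \<in> homog RG" "a \<in> colon smul K" "m \<in> homog MG"
    then have "smul a m \<in> colon_multiples \<K>" unfolding colon_multiples_def using K(1) by blast
    then show "smul a m \<in> M.span (colon_multiples \<K>)" by (rule M.span_base)
  qed
  then show "r \<in> colon smul (M.span (colon_multiples \<K>))" unfolding colon_def by blast
qed

lemma colon_multiples_subset_rad_multiples:
  assumes Q: "Q \<in> qp_Spec_g smul RG MG" and \<K>: "\<And>K. K \<in> \<K> \<Longrightarrow> graded_submodule smul MG K"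
    and QK: "\<And>K. K \<in> \<K> \<Longrightarrow> graded_radical RG (colon smul K) \<subseteq> graded_radical RG (colon smul Q)"
  shows "colon_multiples \<K> \<subseteq> {smul j m | j m. j \<in> rad (colon smul Q)}"
proof
  have IQ: "ideal (colon smul Q)"
    by (rule M.ideal_colon[OF graded_submodule_subspace[OF qp_Spec_g_graded[OF Q]]])
  fix x assume "x \<in> colon_multiples \<K>"
  then obtain r m K where x: "x = smul r m" "r \<in> homog RG" "K \<in> \<K>" "r \<in> colon smul K"
    unfolding colon_multiples_def by blast
  have "r \<in> graded_radical RG (colon smul K)"
    using graded_ideal_subset_graded_radical[OF graded_ideal_colon[OF \<K>[OF x(3)]]] x(4) by blast
  then have "r \<in> rad (colon smul Q)"
    using QK[OF x(3)] graded_radical_homog_iff[OF IQ x(2)] by blast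
  then show "x \<in> {smul j m | j m. j \<in> rad (colon smul Q)}" using x(1) by blast
qed

lemma qp_V_span_colon_multiples:
  assumes fg: "finitely_generated smul" and \<K>: "\<And>K. K \<in> \<K> \<Longrightarrow> graded_submodule smul MG K"
  shows "qp_V smul RG MG (M.span (colon_multiples \<K>))
    = qp_Spec_g smul RG MG \<inter> (\<Inter>K\<in>\<K>. qp_V smul RG MG K)"
proof (intro equalityI subsetI)
  fix Q assume Q: "Q \<in> qp_V smul RG MG (M.span (colon_multiples \<K>))"
  have "Q \<in> qp_V smul RG MG K" if "K \<in> \<K>" for K
  proof -
    have "graded_radical RG (colon smul K) \<subseteq> graded_radical RG (colon smul (M.span (colon_multiples \<K>)))"
      by (rule graded_radical_mono[OF colon_subset_colon_span_colon_multiples[OF that \<K>[OF that]]])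
    then show ?thesis using Q unfolding qp_V_def by blast
  qed
  then show "Q \<in> qp_Spec_g smul RG MG \<inter> (\<Inter>K\<in>\<K>. qp_V smul RG MG K)"
    using qp_V_subset Q by blast
next
  fix Q assume "Q \<in> qp_Spec_g smul RG MG \<inter> (\<Inter>K\<in>\<K>. qp_V smul RG MG K)"
  then have Q: "Q \<in> qp_Spec_g smul RG MG"
    and QK: "\<And>K. K \<in> \<K> \<Longrightarrow> graded_radical RG (colon smul K) \<subseteq> graded_radical RG (colon smul Q)"
    unfolding qp_V_def by blast+
  obtain S where S: "finite S" "M.span S = UNIV" using fg unfolding finitely_generated_def by blast
  have Qs: "M.subspace Q" by (rule graded_submodule_subspace[OF qp_Spec_g_graded[OF Q]])
  have "M.span (colon_multiples \<K>) \<subseteq> M.span {smul j m | j m. j \<in> rad (colon smul Q)}"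
    by (rule M.span_mono[OF colon_multiples_subset_rad_multiples[OF Q \<K> QK]])
  then have "rad (colon smul (M.span (colon_multiples \<K>))) \<subseteq> rad (colon smul Q)"
    by (rule M.rad_colon_subset_if_subset_span[OF S Qs])
  then have "graded_radical RG (colon smul (M.span (colon_multiples \<K>)))
      \<subseteq> graded_radical RG (colon smul Q)"
    by (rule graded_radical_mono_rad)
  then show "Q \<in> qp_V smul RG MG (M.span (colon_multiples \<K>))" using Q unfolding qp_V_def by blast
qed

lemma qp_V_UNIV: "qp_V smul RG MG UNIV = {}"
proof -
  have "Q \<notin> qp_V smul RG MG UNIV" for Q
  proof
    assume Q: "Q \<in> qp_V smul RG MG UNIV"
    then have Qq: "Q \<in> qp_Spec_g smul RG MG" unfolding qp_V_def by blast
    have Qs: "M.subspace Q" by (rule graded_submodule_subspace[OF qp_Spec_g_graded[OF Qq]])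
    have "1 \<in> graded_radical RG (colon smul Q)"
      using Q graded_radical_UNIV unfolding qp_V_def colon_UNIV by auto
    then have "1 \<in> rad (colon smul Q)" using graded_radical_subset_rad[OF M.ideal_colon[OF Qs]] by blast
    then have "smul 1 m \<in> Q" for m unfolding rad_def colon_def by simp
    then have "Q = UNIV" by auto
    then show False using qp_Spec_g_proper[OF Qq] by blast
  qed
  then show ?thesis by blast
qed

lemma istopology_quasi_zariski:
  assumes fg: "finitely_generated smul"
  shows "istopology (\<lambda>U. \<exists>K. graded_submodule smul MG K \<and> U = qp_Spec_g smul RG MG - qp_V smul RG MG K)"
  unfolding istopology_def
proof (intro conjI allI impI)
  fix U W
  assume "\<exists>K. graded_submodule smul MG K \<and> U = qp_Spec_g smul RG MG - qp_V smul RG MG K"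
    and "\<exists>L. graded_submodule smul MG L \<and> W = qp_Spec_g smul RG MG - qp_V smul RG MG L"
  then obtain K L where K: "graded_submodule smul MG K" "U = qp_Spec_g smul RG MG - qp_V smul RG MG K"
    and L: "graded_submodule smul MG L" "W = qp_Spec_g smul RG MG - qp_V smul RG MG L"
    by blast
  have "U \<inter> W = qp_Spec_g smul RG MG - qp_V smul RG MG (K \<inter> L)"
    unfolding K(2) L(2) qp_V_Int[OF K(1) L(1)] by blast
  then show "\<exists>K. graded_submodule smul MG K \<and> U \<inter> W = qp_Spec_g smul RG MG - qp_V smul RG MG K"
    using graded_submodule_Int[OF K(1) L(1)] by blast
next
  fix \<U>
  assume \<U>: "\<forall>U\<in>\<U>. \<exists>K. graded_submodule smul MG K \<and> U = qp_Spec_g smul RG MG - qp_V smul RG MG K"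
  define \<K> where "\<K> = {K. graded_submodule smul MG K \<and> qp_Spec_g smul RG MG - qp_V smul RG MG K \<in> \<U>}"
  have \<K>: "\<And>K. K \<in> \<K> \<Longrightarrow> graded_submodule smul MG K" unfolding \<K>_def by blast
  let ?L = "M.span (colon_multiples \<K>)"
  have "\<Union>\<U> = (\<Union>K\<in>\<K>. qp_Spec_g smul RG MG - qp_V smul RG MG K)"
  proof (intro equalityI subsetI)
    fix Q assume "Q \<in> \<Union>\<U>"
    then obtain U where U: "U \<in> \<U>" "Q \<in> U" by blast
    then obtain K where "graded_submodule smul MG K" "U = qp_Spec_g smul RG MG - qp_V smul RG MG K"
      using \<U> by blast
    then show "Q \<in> (\<Union>K\<in>\<K>. qp_Spec_g smul RG MG - qp_V smul RG MG K)"
      using U unfolding \<K>_def by blast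
  qed (auto simp: \<K>_def)
  also have "\<dots> = qp_Spec_g smul RG MG - (qp_Spec_g smul RG MG \<inter> (\<Inter>K\<in>\<K>. qp_V smul RG MG K))"
    by blast
  also have "\<dots> = qp_Spec_g smul RG MG - qp_V smul RG MG ?L"
    by (simp only: qp_V_span_colon_multiples[OF fg \<K>])
  finally have "\<Union>\<U> = qp_Spec_g smul RG MG - qp_V smul RG MG ?L" .
  moreover have "graded_submodule smul MG ?L"
    by (rule graded_submodule_span_homog[OF colon_multiples_homog])
  ultimately show "\<exists>K. graded_submodule smul MG K \<and> \<Union>\<U> = qp_Spec_g smul RG MG - qp_V smul RG MG K"
    by blast
qed

lemma openin_quasi_zariski:
  assumes fg: "finitely_generated smul"
  shows "openin (quasi_zariski smul RG MG) U \<longleftrightarrow>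
    (\<exists>K. graded_submodule smul MG K \<and> U = qp_Spec_g smul RG MG - qp_V smul RG MG K)"
  unfolding quasi_zariski_def using istopology_quasi_zariski[OF fg] by simp

lemma topspace_quasi_zariski:
  assumes fg: "finitely_generated smul"
  shows "topspace (quasi_zariski smul RG MG) = qp_Spec_g smul RG MG"
proof -
  have "openin (quasi_zariski smul RG MG) (qp_Spec_g smul RG MG)"
    unfolding openin_quasi_zariski[OF fg] using graded_submodule_UNIV qp_V_UNIV by blast
  moreover have "U \<subseteq> qp_Spec_g smul RG MG" if "openin (quasi_zariski smul RG MG) U" for U
    using that unfolding openin_quasi_zariski[OF fg] by blast
  ultimately show ?thesis unfolding topspace_def by blast
qed

lemma closedin_quasi_zariski:
  assumes fg: "finitely_generated smul"
  shows "closedin (quasi_zariski smul RG MG) C \<longleftrightarrow>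
    (\<exists>K. graded_submodule smul MG K \<and> C = qp_V smul RG MG K)"
proof
  assume "closedin (quasi_zariski smul RG MG) C"
  then obtain K where K: "graded_submodule smul MG K" "C \<subseteq> qp_Spec_g smul RG MG"
    "qp_Spec_g smul RG MG - C = qp_Spec_g smul RG MG - qp_V smul RG MG K"
    unfolding closedin_def topspace_quasi_zariski[OF fg] openin_quasi_zariski[OF fg] by blast
  then have "C = qp_V smul RG MG K" using qp_V_subset by blast
  then show "\<exists>K. graded_submodule smul MG K \<and> C = qp_V smul RG MG K" using K(1) by blast
next
  assume "\<exists>K. graded_submodule smul MG K \<and> C = qp_V smul RG MG K"
  then obtain K where K: "graded_submodule smul MG K" "C = qp_V smul RG MG K" by blast
  then show "closedin (quasi_zariski smul RG MG) C"
    unfolding closedin_def topspace_quasi_zariski[OF fg] openin_quasi_zariski[OF fg]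
    using qp_V_subset by blast
qed

lemma closedin_singleton_quasi_zariski_iff:
  assumes fg: "finitely_generated smul" and Q: "Q \<in> qp_Spec_g smul RG MG"
  shows "closedin (quasi_zariski smul RG MG) {Q} \<longleftrightarrow> qp_V smul RG MG Q = {Q}"
proof
  assume "closedin (quasi_zariski smul RG MG) {Q}"
  then obtain K where K: "{Q} = qp_V smul RG MG K" unfolding closedin_quasi_zariski[OF fg] by blast
  then have "qp_V smul RG MG Q \<subseteq> qp_V smul RG MG K" unfolding qp_V_def by blast
  moreover have "Q \<in> qp_V smul RG MG Q" using Q unfolding qp_V_def by blast
  ultimately show "qp_V smul RG MG Q = {Q}" using K by blast
next
  assume "qp_V smul RG MG Q = {Q}"
  then show "closedin (quasi_zariski smul RG MG) {Q}"
    unfolding closedin_quasi_zariski[OF fg] using qp_Spec_g_graded[OF Q] by metis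
qed

lemma t1_space_quasi_zariski_iff:
  assumes fg: "finitely_generated smul"
  shows "t1_space (quasi_zariski smul RG MG) \<longleftrightarrow> (\<forall>Q\<in>qp_Spec_g smul RG MG. qp_V smul RG MG Q = {Q})"
  unfolding t1_space_closedin_singleton topspace_quasi_zariski[OF fg]
  using closedin_singleton_quasi_zariski_iff[OF fg] by blast

section \<open>Finitely generated graded modules are primeful\<close>

lemma graded_prime_ideal_mult_not_in:
  assumes "graded_prime_ideal RG p" "s \<in> homog RG" "s \<notin> p" "t \<in> homog RG" "t \<notin> p"
  shows "s * t \<notin> p"
  using assms unfolding graded_prime_ideal_def by blast

text \<open>The contraction to \<open>M\<close> of the homogeneous localisation of \<open>N\<close> at \<open>p\<close>.\<close>

definition homog_saturation :: "'r set \<Rightarrow> 'm set \<Rightarrow> 'm set" where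
  "homog_saturation p N = {x. \<exists>s\<in>homog RG. s \<notin> p \<and> smul s x \<in> N}"

lemma homog_saturation_superset:
  assumes p: "graded_prime_ideal RG p" and N: "M.subspace N"
  shows "N \<subseteq> homog_saturation p N"
proof
  fix x assume "x \<in> N"
  obtain s where "s \<in> homog RG" "s \<notin> p"
    using p obtain_homog_not_in unfolding graded_prime_ideal_def by blast
  then show "x \<in> homog_saturation p N"
    unfolding homog_saturation_def using M.subspace_scale[OF N \<open>x \<in> N\<close>] by blast
qed

lemma homog_saturation_cancel:
  assumes p: "graded_prime_ideal RG p" and r: "r \<in> homog RG" "r \<notin> p"
    and rm: "smul r m \<in> homog_saturation p N"
  shows "m \<in> homog_saturation p N"
proof -
  obtain s where s: "s \<in> homog RG" "s \<notin> p" "smul s (smul r m) \<in> N"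
    using rm unfolding homog_saturation_def by blast
  then have "smul (s * r) m \<in> N" by simp
  then show ?thesis
    unfolding homog_saturation_def
    using homog_mult[OF s(1) r(1)] graded_prime_ideal_mult_not_in[OF p s(1,2) r] by blast
qed

lemma homog_saturation_subspace:
  assumes p: "graded_prime_ideal RG p" and N: "M.subspace N"
  shows "M.subspace (homog_saturation p N)"
  unfolding M.subspace_def
proof (intro conjI ballI allI)
  show "0 \<in> homog_saturation p N"
    using homog_saturation_superset[OF p N] M.subspace_0[OF N] by blast
next
  fix x y assume "x \<in> homog_saturation p N" "y \<in> homog_saturation p N"
  then obtain s t where st: "s \<in> homog RG" "s \<notin> p" "smul s x \<in> N"
    "t \<in> homog RG" "t \<notin> p" "smul t y \<in> N" unfolding homog_saturation_def by blast
  have "smul (s * t) (x + y) = smul t (smul s x) + smul s (smul t y)"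
    by (simp add: M.scale_right_distrib mult.commute)
  also have "\<dots> \<in> N" using st M.subspace_scale[OF N] M.subspace_add[OF N] by blast
  finally show "x + y \<in> homog_saturation p N"
    unfolding homog_saturation_def
    using homog_mult[OF st(1,4)] graded_prime_ideal_mult_not_in[OF p st(1,2,4,5)] by blast
next
  fix c x assume "x \<in> homog_saturation p N"
  then obtain s where s: "s \<in> homog RG" "s \<notin> p" "smul s x \<in> N"
    unfolding homog_saturation_def by blast
  have "smul s (smul c x) = smul c (smul s x)" by (rule M.scale_left_commute)
  also have "\<dots> \<in> N" using s(3) M.subspace_scale[OF N] by blast
  finally show "smul c x \<in> homog_saturation p N" unfolding homog_saturation_def using s(1,2) by blast
qed

lemma homog_saturation_graded:
  assumes p: "graded_prime_ideal RG p" and N: "graded_submodule smul MG N"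
  shows "graded_submodule smul MG (homog_saturation p N)"
  unfolding graded_submodule_iff
proof (intro conjI ballI)
  show "M.subspace (homog_saturation p N)"
    by (rule homog_saturation_subspace[OF p graded_submodule_subspace[OF N]])
  fix x assume "x \<in> homog_saturation p N"
  then obtain s where s: "s \<in> homog RG" "s \<notin> p" "smul s x \<in> N"
    unfolding homog_saturation_def by blast
  obtain h where h: "s \<in> RG h" using s(1) by (rule homogE)
  obtain d where d: "hdecomp MG x d"
    by (rule internal_direct_sum_obtain_hdecomp[OF internal_direct_sum_MG])
  have sd: "hdecomp MG (smul s x) (\<lambda>k. smul s (d (- h + k)))"
  proof (rule hdecomp_shift[OF d, where \<phi> = "\<lambda>g. h + g"])
    show "smul s (a + b) = smul s a + smul s b" for a b by (rule M.scale_right_distrib)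
    show "smul s a \<in> MG (h + g)" if "a \<in> MG g" for g a by (rule smul_degree[OF h that])
  qed (auto simp: add.assoc[symmetric])
  have "d g \<in> homog MG \<inter> homog_saturation p N" for g
  proof -
    have "smul s (d (- h + (h + g))) \<in> N" by (rule graded_submodule_component[OF N s(3) sd])
    then have "smul s (d g) \<in> N" by (simp add: add.assoc[symmetric])
    then have "d g \<in> homog_saturation p N" unfolding homog_saturation_def using s(1,2) by blast
    moreover have "d g \<in> homog MG" by (rule homogI[of _ MG g, OF hdecomp_component[OF d]])
    ultimately show ?thesis by blast
  qed
  then obtain xs where "set xs \<subseteq> homog MG \<inter> homog_saturation p N" "x = sum_list xs"
    by (rule hdecomp_sum_list[OF d])
  then show "\<exists>xs. set xs \<subseteq> homog MG \<inter> homog_saturation p N \<and> x = sum_list xs" by blast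
qed

lemma homog_saturation_uniform_multiplier:
  assumes S: "finite S" "M.span S = UNIV" and p: "graded_prime_ideal RG p" and N: "M.subspace N"
    and r: "r \<in> homog RG" "r \<notin> p" "r \<in> colon smul (homog_saturation p N)"
  obtains t where "t \<in> homog RG" "t \<notin> p" "\<And>m. smul t m \<in> N"
proof -
  have "\<forall>x. \<exists>s. s \<in> homog RG \<and> s \<notin> p \<and> smul s (smul r x) \<in> N"
    using r(3) unfolding colon_def homog_saturation_def by blast
  then obtain \<sigma> where \<sigma>: "\<And>x. \<sigma> x \<in> homog RG" "\<And>x. \<sigma> x \<notin> p" "\<And>x. smul (\<sigma> x) (smul r x) \<in> N"
    by metis
  define t where "t = r * prod \<sigma> S"
  have "r * prod \<sigma> F \<in> homog RG \<and> r * prod \<sigma> F \<notin> p" if "finite F" for F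
    using that
  proof (induction F rule: finite_induct)
    case (insert x F)
    then have "r * prod \<sigma> (insert x F) = (r * prod \<sigma> F) * \<sigma> x" by (simp add: mult_ac)
    then show ?case
      using insert.IH homog_mult[OF _ \<sigma>(1)] graded_prime_ideal_mult_not_in[OF p _ _ \<sigma>(1,2)] by simp
  qed (use r(1,2) in simp)
  then have t: "t \<in> homog RG" "t \<notin> p" unfolding t_def using S(1) by blast+
  have "S \<subseteq> (\<lambda>y. smul t y) -` N"
  proof
    fix x assume x: "x \<in> S"
    have "t = prod \<sigma> (S - {x}) * \<sigma> x * r"
      unfolding t_def using prod.remove[OF S(1) x, of \<sigma>] by (simp add: mult_ac)
    then have "smul t x = smul (prod \<sigma> (S - {x})) (smul (\<sigma> x) (smul r x))" by (simp add: mult.assoc)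
    also have "\<dots> \<in> N" using \<sigma>(3) M.subspace_scale[OF N] by blast
    finally show "x \<in> (\<lambda>y. smul t y) -` N" by simp
  qed
  moreover have "M.subspace ((\<lambda>y. smul t y) -` N)"
    by (rule module_hom.subspace_vimage[OF M.module_hom_scale_self N])
  ultimately have "UNIV \<subseteq> (\<lambda>y. smul t y) -` N" using M.span_minimal S(2) by metis
  then show thesis using that t by blast
qed

lemma graded_submodule_span_ideal_multiples:
  assumes J: "graded_ideal RG J" and K: "graded_submodule smul MG K"
  shows "graded_submodule smul MG (M.span (K \<union> {smul j m | j m. j \<in> J}))"
proof (rule graded_submodule_span)
  let ?X = "K \<union> {smul j m | j m. j \<in> J}"
  let ?T = "{x. \<exists>xs. set xs \<subseteq> homog MG \<inter> M.span ?X \<and> x = sum_list xs}"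
  have T: "M.subspace ?T" by (rule subspace_homog_sums[OF M.subspace_span])
  have sub: "?X \<subseteq> M.span ?X" by (rule M.span_superset)
  fix w assume "w \<in> ?X"
  then consider "w \<in> K" | j m where "j \<in> J" "w = smul j m" by blast
  then have "w \<in> ?T"
  proof cases
    case 1
    then obtain xs where "set xs \<subseteq> homog MG \<inter> K" "w = sum_list xs"
      by (rule graded_submodule_homog_decomp[OF K])
    then show ?thesis using sub by blast
  next
    case 2
    have "smul j m \<in> ?T"
    proof (rule smul_mem_subspace_if_homog[OF J T 2(1)])
      fix a m' assume "a \<in> homog RG" "a \<in> J" "m' \<in> homog MG"
      then have "smul a m' \<in> homog MG \<inter> M.span ?X" using homog_smul sub by blast
      then show "smul a m' \<in> ?T" by (intro CollectI exI[of _ "[smul a m']"]) auto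
    qed
    then show ?thesis using 2(2) by simp
  qed
  then show "\<exists>xs. set xs \<subseteq> homog MG \<inter> M.span ?X \<and> w = sum_list xs" by blast
qed

lemma colon_homog_saturation:
  assumes fg: "finitely_generated smul" and p: "graded_prime_ideal RG p"
    and K: "graded_submodule smul MG K" and Kp: "colon smul K \<subseteq> p"
  shows "colon smul (homog_saturation p (M.span (K \<union> {smul j m | j m. j \<in> p}))) = p"
    (is "colon smul (homog_saturation p ?N) = p")
proof
  have pg: "graded_ideal RG p" and pi: "ideal p"
    using p graded_ideal_imp_ideal unfolding graded_prime_ideal_def by blast+
  have N: "M.subspace ?N" by (rule M.subspace_span)
  show "p \<subseteq> colon smul (homog_saturation p ?N)"
  proof
    fix r assume "r \<in> p"
    then have "smul r x \<in> ?N" for x by (intro M.span_base) blast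
    then show "r \<in> colon smul (homog_saturation p ?N)"
      using homog_saturation_superset[OF p N] unfolding colon_def by blast
  qed
  have Ng: "graded_submodule smul MG ?N" by (rule graded_submodule_span_ideal_multiples[OF pg K])
  show "colon smul (homog_saturation p ?N) \<subseteq> p"
  proof (rule graded_ideal_subset[OF graded_ideal_colon[OF homog_saturation_graded[OF p Ng]] pi])
    fix r assume r: "r \<in> homog RG" "r \<in> colon smul (homog_saturation p ?N)"
    show "r \<in> p"
    proof (rule ccontr)
      assume "r \<notin> p"
      obtain S where S: "finite S" "M.span S = UNIV" using fg unfolding finitely_generated_def by blast
      obtain t where t: "t \<in> homog RG" "t \<notin> p" "\<And>m. smul t m \<in> ?N"
        using homog_saturation_uniform_multiplier[OF S p N r(1) \<open>r \<notin> p\<close> r(2)] by blast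
      obtain n a where n: "n > 0" and a: "a \<in> p" and na: "\<And>m. smul (t ^ n + a) m \<in> K"
        using M.determinant_trick[OF S graded_submodule_subspace[OF K] pi t(3)] by blast
      have "t ^ n + a \<in> p" using na Kp unfolding colon_def by blast
      then have "(t ^ n + a) - a \<in> p" using ideal_diff[OF pi _ a] by blast
      then have "t ^ n \<in> p" by simp
      then show False using graded_prime_ideal_power[OF p t(1) n] t(2) by blast
    qed
  qed
qed

lemma graded_primeful_if_finitely_generated:
  assumes fg: "finitely_generated smul" and K: "graded_submodule smul MG K"
  shows "graded_primeful smul RG MG K"
  unfolding graded_primeful_def
proof (intro allI impI, elim conjE)
  fix p assume p: "graded_prime_ideal RG p" and Kp: "colon smul K \<subseteq> p"
  define N where "N = M.span (K \<union> {smul j m | j m. j \<in> p})"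
  define P where "P = homog_saturation p N"
  have pg: "graded_ideal RG p" using p unfolding graded_prime_ideal_def by blast
  have Ng: "graded_submodule smul MG N"
    unfolding N_def by (rule graded_submodule_span_ideal_multiples[OF pg K])
  have colP: "colon smul P = p"
    unfolding P_def N_def by (rule colon_homog_saturation[OF fg p K Kp])
  have "K \<subseteq> N" unfolding N_def using M.span_superset by blast
  then have KP: "K \<subseteq> P"
    unfolding P_def using homog_saturation_superset[OF p graded_submodule_subspace[OF Ng]] by blast
  have "graded_prime_submodule smul RG MG P"
    unfolding graded_prime_submodule_def
  proof (intro conjI ballI impI)
    show "graded_submodule smul MG P" unfolding P_def by (rule homog_saturation_graded[OF p Ng])
    show "P \<noteq> UNIV" using colP p colon_eq_UNIV_iff unfolding graded_prime_ideal_def by blast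
    fix r m assume "r \<in> homog RG" "m \<in> homog MG" "smul r m \<in> P"
    then show "m \<in> P \<or> r \<in> colon smul P"
      using homog_saturation_cancel[OF p] colP unfolding P_def by blast
  qed
  then show "\<exists>P\<in>Spec_g smul RG MG. K \<subseteq> P \<and> colon smul P = p"
    using KP colP unfolding Spec_g_def by blast
qed

lemma Spec_g_subset_qp_Spec_g:
  assumes fg: "finitely_generated smul"
  shows "Spec_g smul RG MG \<subseteq> qp_Spec_g smul RG MG"
proof
  fix P assume "P \<in> Spec_g smul RG MG"
  then have P: "graded_prime_submodule smul RG MG P" unfolding Spec_g_def by blast
  then have "graded_submodule smul MG P" unfolding graded_prime_submodule_def by blast
  then show "P \<in> qp_Spec_g smul RG MG"
    unfolding qp_Spec_g_def
    using graded_prime_imp_quasi_primary[OF P] graded_primeful_if_finitely_generated[OF fg] by blast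
qed

section \<open>Maximal graded submodules\<close>

lemma Max_gD:
  assumes "K \<in> Max_g smul MG"
  shows "graded_submodule smul MG K" "K \<noteq> UNIV"
    "\<And>N. graded_submodule smul MG N \<Longrightarrow> K \<subseteq> N \<Longrightarrow> N = K \<or> N = UNIV"
  using assms unfolding Max_g_def by blast+

lemma Max_g_subset_Spec_g: "Max_g smul MG \<subseteq> Spec_g smul RG MG"
proof
  fix K assume K: "K \<in> Max_g smul MG"
  note Kg = Max_gD(1)[OF K]
  have "r \<in> colon smul K"
    if r: "r \<in> homog RG" and m: "m \<in> homog MG" and rm: "smul r m \<in> K" and mK: "m \<notin> K" for r m
  proof -
    have "M.span (insert m K) = UNIV"
      using Max_gD(3)[OF K graded_submodule_span_insert[OF Kg m]] M.span_superset[of "insert m K"] mK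
      by blast
    moreover have "insert m K \<subseteq> (\<lambda>y. smul r y) -` K"
      using rm M.subspace_scale[OF graded_submodule_subspace[OF Kg]] by auto
    moreover have "M.subspace ((\<lambda>y. smul r y) -` K)"
      by (rule module_hom.subspace_vimage[OF M.module_hom_scale_self graded_submodule_subspace[OF Kg]])
    ultimately have "UNIV \<subseteq> (\<lambda>y. smul r y) -` K" using M.span_minimal by metis
    then show ?thesis unfolding colon_def by blast
  qed
  then show "K \<in> Spec_g smul RG MG"
    unfolding Spec_g_def graded_prime_submodule_def using Kg Max_gD(2)[OF K] by blast
qed

lemma obtain_Max_g_superset:
  assumes fg: "finitely_generated smul" and Q: "graded_submodule smul MG Q" "Q \<noteq> UNIV"
  obtains K where "K \<in> Max_g smul MG" "Q \<subseteq> K"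
proof -
  obtain S where S: "finite S" "M.span S = UNIV" using fg unfolding finitely_generated_def by blast
  define \<A> where "\<A> = {N. graded_submodule smul MG N \<and> N \<noteq> UNIV \<and> Q \<subseteq> N}"
  have "\<exists>K\<in>\<A>. \<forall>N\<in>\<A>. K \<subseteq> N \<longrightarrow> N = K"
  proof (rule subset_Zorn_nonempty)
    show "\<A> \<noteq> {}" using Q unfolding \<A>_def by blast
    fix C assume C: "C \<noteq> {}" "subset.chain \<A> C"
    have "subset.chain {N. graded_submodule smul MG N} C"
      using C(2) unfolding \<A>_def subset.chain_def by blast
    then have "graded_submodule smul MG (\<Union>C)" by (rule graded_submodule_Union_chain[OF C(1)])
    moreover have "\<Union>C \<noteq> UNIV"
      by (rule M.Union_chain_neq_UNIV[OF S C])
        (use C(2) graded_submodule_subspace in \<open>auto simp: \<A>_def subset.chain_def\<close>)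
    ultimately show "\<Union>C \<in> \<A>" using C unfolding \<A>_def subset.chain_def by blast
  qed
  then obtain K where "K \<in> \<A>" and max: "\<And>N. N \<in> \<A> \<Longrightarrow> K \<subseteq> N \<Longrightarrow> N = K" by blast
  then have K: "graded_submodule smul MG K" "K \<noteq> UNIV" "Q \<subseteq> K" unfolding \<A>_def by blast+
  have "N = K \<or> N = UNIV" if "graded_submodule smul MG N" "K \<subseteq> N" for N
    using max[of N] that K(3) unfolding \<A>_def by blast
  then have "K \<in> Max_g smul MG" unfolding Max_g_def using K(1,2) by blast
  then show thesis using that K(3) by blast
qed

lemma Max_g_eq_if_graded_radical_colon_subset:
  assumes fg: "finitely_generated smul" and qp_Max: "qp_Spec_g smul RG MG \<subseteq> Max_g smul MG"
    and Q: "Q \<in> Max_g smul MG" and Q': "Q' \<in> Max_g smul MG"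
    and Gr: "graded_radical RG (colon smul Q) \<subseteq> graded_radical RG (colon smul Q')"
  shows "Q = Q'"
proof -
  have QP: "graded_prime_submodule smul RG MG Q" and Q'P: "graded_prime_submodule smul RG MG Q'"
    using Q Q' Max_g_subset_Spec_g unfolding Spec_g_def by blast+
  have p': "graded_prime_ideal RG (colon smul Q')" by (rule graded_prime_ideal_colon[OF Q'P])
  have "colon smul Q \<subseteq> graded_radical RG (colon smul Q)"
    by (rule graded_ideal_subset_graded_radical[OF graded_ideal_colon[OF Max_gD(1)[OF Q]]])
  then have "colon smul Q \<subseteq> colon smul Q'"
    using Gr graded_radical_graded_prime_ideal[OF p'] by blast
  then obtain P where P: "P \<in> Spec_g smul RG MG" "Q \<subseteq> P" "colon smul P = colon smul Q'"
    using graded_primeful_if_finitely_generated[OF fg Max_gD(1)[OF Q]] p'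
    unfolding graded_primeful_def by blast
  have "P = Q"
    using Max_gD(3)[OF Q _ P(2)] P(1) unfolding Spec_g_def graded_prime_submodule_def by blast
  then have "graded_prime_submodule smul RG MG (Q \<inter> Q')"
    using graded_prime_submodule_Int[OF QP Q'P] P(3) by blast
  then have "Q \<inter> Q' \<in> Max_g smul MG"
    using qp_Max Spec_g_subset_qp_Spec_g[OF fg] unfolding Spec_g_def by blast
  then have "Q = Q \<inter> Q'" and "Q' = Q \<inter> Q'"
    using Max_gD(3)[of "Q \<inter> Q'"] Max_gD(1,2)[OF Q] Max_gD(1,2)[OF Q'] by blast+
  then show ?thesis by blast
qed

lemma qp_V_singleton_iff_qp_Spec_g_eq_Max_g:
  assumes fg: "finitely_generated smul"
  shows "(\<forall>Q\<in>qp_Spec_g smul RG MG. qp_V smul RG MG Q = {Q}) \<longleftrightarrow> qp_Spec_g smul RG MG = Max_g smul MG"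
proof
  have Max_qp: "Max_g smul MG \<subseteq> qp_Spec_g smul RG MG"
    using Max_g_subset_Spec_g Spec_g_subset_qp_Spec_g[OF fg] by blast
  assume closed: "\<forall>Q\<in>qp_Spec_g smul RG MG. qp_V smul RG MG Q = {Q}"
  have "Q \<in> Max_g smul MG" if Q: "Q \<in> qp_Spec_g smul RG MG" for Q
  proof -
    obtain K where K: "K \<in> Max_g smul MG" "Q \<subseteq> K"
      using obtain_Max_g_superset[OF fg qp_Spec_g_graded[OF Q] qp_Spec_g_proper[OF Q]] by blast
    have "graded_radical RG (colon smul Q) \<subseteq> graded_radical RG (colon smul K)"
      by (rule graded_radical_mono[OF colon_mono[OF K(2)]])
    then have "K \<in> qp_V smul RG MG Q" using Max_qp K(1) unfolding qp_V_def by blast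
    moreover have "qp_V smul RG MG Q = {Q}" using closed Q by blast
    ultimately show ?thesis using K(1) by simp
  qed
  then show "qp_Spec_g smul RG MG = Max_g smul MG" using Max_qp by blast
next
  assume eq: "qp_Spec_g smul RG MG = Max_g smul MG"
  have "qp_V smul RG MG Q = {Q}" if Q: "Q \<in> qp_Spec_g smul RG MG" for Q
  proof -
    have "Q = Q'" if "Q' \<in> qp_V smul RG MG Q" for Q'
    proof (rule Max_g_eq_if_graded_radical_colon_subset[OF fg equalityD1[OF eq]])
      show "Q \<in> Max_g smul MG" "Q' \<in> Max_g smul MG"
        using Q qp_V_subset that unfolding eq by blast+
      show "graded_radical RG (colon smul Q) \<subseteq> graded_radical RG (colon smul Q')"
        using that unfolding qp_V_def by blast
    qed
    moreover have "Q \<in> qp_V smul RG MG Q" using Q unfolding qp_V_def by blast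
    ultimately show ?thesis by blast
  qed
  then show "\<forall>Q\<in>qp_Spec_g smul RG MG. qp_V smul RG MG Q = {Q}" by blast
qed

end

theorem theorem4p5:
  fixes smul :: "'r::comm_ring_1 \<Rightarrow> 'm::ab_group_add \<Rightarrow> 'm"
    and RG :: "'g::group_add \<Rightarrow> 'r set"
    and MG :: "'g \<Rightarrow> 'm set"
  assumes "graded_module smul RG MG"
    and "finitely_generated smul"
  shows "(t1_space (quasi_zariski smul RG MG) \<longleftrightarrow> qp_Spec_g smul RG MG = Max_g smul MG)
    \<and> (qp_Spec_g smul RG MG = Max_g smul MG \<longrightarrow>
         qp_Spec_g smul RG MG = Spec_g smul RG MG \<and> Spec_g smul RG MG = Max_g smul MG)"
proof -
  interpret gmod smul RG MG by (rule gmod.intro) (fact assms(1))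
  have "t1_space (quasi_zariski smul RG MG) \<longleftrightarrow> qp_Spec_g smul RG MG = Max_g smul MG"
    using t1_space_quasi_zariski_iff[OF assms(2)] qp_V_singleton_iff_qp_Spec_g_eq_Max_g[OF assms(2)]
    by simp
  moreover have "qp_Spec_g smul RG MG = Spec_g smul RG MG \<and> Spec_g smul RG MG = Max_g smul MG"
    if "qp_Spec_g smul RG MG = Max_g smul MG"
    using that Max_g_subset_Spec_g Spec_g_subset_qp_Spec_g[OF assms(2)] by blast
  ultimately show ?thesis by blast
qed

end
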